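(* Let $\Gamma$ be a connected amply regular graph with diameter $d=5$ and parameters $(v,k,\lambda,\mu)$, where $\mu=\frac{k-1}{2}$ and $k\ge5$ is odd. Then $\Gamma$ is the $5$-cube.
   Context: An amply regular graph with parameters $(v,k,\lambda,\mu)$ is a $k$-regular graph on $v$ vertices in which any two adjacent vertices have exactly $\lambda$ common neighbours and any two vertices at distance $2$ have exactly $\mu$ common neighbours. *)

theory Defs
  imports Main
begin

definition simple_graph :: "'a set \<Rightarrow> ('a \<Rightarrow> 'a \<Rightarrow> bool) \<Rightarrow> bool" where
  "simple_graph V E \<longleftrightarrow> finite V \<and> (\<forall>x y. E x y \<longrightarrow> x \<in> V \<and> y \<in> V)
     \<and> (\<forall>x y. E x y \<longrightarrow> E y x) \<and> (\<forall>x. \<not> E x x)"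

definition nbrs :: "'a set \<Rightarrow> ('a \<Rightarrow> 'a \<Rightarrow> bool) \<Rightarrow> 'a \<Rightarrow> 'a set" where
  "nbrs V E x = {y \<in> V. E x y}"

definition walk_of_length :: "'a set \<Rightarrow> ('a \<Rightarrow> 'a \<Rightarrow> bool) \<Rightarrow> 'a \<Rightarrow> 'a \<Rightarrow> nat \<Rightarrow> bool" where
  "walk_of_length V E x y n \<longleftrightarrow> (\<exists>p. length p = Suc n \<and> set p \<subseteq> V \<and> hd p = x \<and> last p = y
      \<and> (\<forall>i < n. E (p ! i) (p ! Suc i)))"

definition connected_graph :: "'a set \<Rightarrow> ('a \<Rightarrow> 'a \<Rightarrow> bool) \<Rightarrow> bool" where
  "connected_graph V E \<longleftrightarrow> V \<noteq> {} \<and> (\<forall>x\<in>V. \<forall>y\<in>V. \<exists>n. walk_of_length V E x y n)"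

definition gdist :: "'a set \<Rightarrow> ('a \<Rightarrow> 'a \<Rightarrow> bool) \<Rightarrow> 'a \<Rightarrow> 'a \<Rightarrow> nat" where
  "gdist V E x y = (LEAST n. walk_of_length V E x y n)"

definition diameter :: "'a set \<Rightarrow> ('a \<Rightarrow> 'a \<Rightarrow> bool) \<Rightarrow> nat" where
  "diameter V E = Max {gdist V E x y | x y. x \<in> V \<and> y \<in> V}"

definition amply_regular :: "'a set \<Rightarrow> ('a \<Rightarrow> 'a \<Rightarrow> bool) \<Rightarrow> nat \<Rightarrow> nat \<Rightarrow> nat \<Rightarrow> nat \<Rightarrow> bool" where
  "amply_regular V E v k lam mu \<longleftrightarrow> simple_graph V E \<and> card V = v
     \<and> (\<forall>x\<in>V. card (nbrs V E x) = k)
     \<and> (\<forall>x\<in>V. \<forall>y\<in>V. E x y \<longrightarrow> card (nbrs V E x \<inter> nbrs V E y) = lam)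
     \<and> (\<forall>x\<in>V. \<forall>y\<in>V. gdist V E x y = 2 \<longrightarrow> card (nbrs V E x \<inter> nbrs V E y) = mu)"

definition cube_vertices :: "nat \<Rightarrow> nat set set" where
  "cube_vertices n = Pow {..<n}"

definition cube_adj :: "nat set \<Rightarrow> nat set \<Rightarrow> bool" where
  "cube_adj A B \<longleftrightarrow> card ((A - B) \<union> (B - A)) = 1"

definition graph_iso_cube :: "'a set \<Rightarrow> ('a \<Rightarrow> 'a \<Rightarrow> bool) \<Rightarrow> nat \<Rightarrow> bool" where
  "graph_iso_cube V E n \<longleftrightarrow> (\<exists>f. bij_betw f V (cube_vertices n)
      \<and> (\<forall>x\<in>V. \<forall>y\<in>V. E x y \<longleftrightarrow> cube_adj (f x) (f y)))"

end

theory Submission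
  imports Defs
begin

text \<open>
  Let \<open>x\<close> and \<open>z\<close> be at distance 5 and let \<open>D\<^sup>i\<^sub>j\<close> consist of the vertices at distance \<open>i\<close>
  from \<open>x\<close> and \<open>j\<close> from \<open>z\<close>. As \<open>k = 2\<mu> + 1\<close>, a vertex at distance 3 from \<open>x\<close> has more than
  \<open>\<mu>\<close> neighbours at distance 2 from \<open>x\<close> (equality would force \<open>\<lambda> \<ge> 2\<mu> - 1 = k - 2\<close>, hence
  \<open>\<mu> \<ge> k - 1\<close>). So a vertex of \<open>D\<^sup>2\<^sub>3\<close> has \<open>\<mu>\<close> neighbours in \<open>\<Gamma>(x)\<close> and \<open>\<mu> + 1\<close> in \<open>D\<^sup>3\<^sub>2\<close>,
  and symmetrically. A neighbour of \<open>x\<close> adjacent to one of the \<open>\<mu> + 1\<close> neighbours of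
  \<open>u \<in> D\<^sup>3\<^sub>2\<close> in \<open>D\<^sup>2\<^sub>3\<close> misses exactly one of them. Tracking these missed vertices produces
  \<open>(\<mu> + 1)(\<mu> - 1) + 2\<close> distinct neighbours of a single neighbour of \<open>x\<close>; as this is at most
  \<open>2\<mu> + 1\<close>, \<open>\<mu> = 2\<close> and \<open>k = 5\<close>. Then every vertex \<open>v\<close> lies on a geodesic from \<open>x\<close> to \<open>z\<close>
  and has exactly \<open>d(x, v)\<close> neighbours closer to \<open>x\<close>, and labelling \<open>v\<close> by the set of
  neighbours of \<open>x\<close> on geodesics from \<open>x\<close> to \<open>v\<close> is an isomorphism onto the cube on \<open>\<Gamma>(x)\<close>.
\<close>

lemma card_ge_2E:
  assumes "2 \<le> card A" obtains a b where "a \<in> A" "b \<in> A" "a \<noteq> b"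
proof -
  have "finite A" using assms card.infinite by force
  then show thesis using assms card_le_Suc0_iff_eq that by fastforce
qed

lemma subset_card_Suc_eq_Diff:
  assumes "finite A" "B \<subseteq> A" "Suc (card B) = card A" obtains a where "a \<in> A" "B = A - {a}"
proof -
  have "finite B" using assms(1,2) by (rule finite_subset[rotated])
  then have "card (A - B) = 1" using assms by (simp add: card_Diff_subset)
  then obtain a where "A - B = {a}" by (rule card_1_singletonE)
  then show thesis using that assms(2) by blast
qed

lemma card_sym_diff_image:
  assumes "inj_on h S" "A \<subseteq> S" "B \<subseteq> S"
  shows "card (sym_diff (h ` A) (h ` B)) = card (sym_diff A B)"
proof -
  have "h ` A - h ` B = h ` (A - B)" "h ` B - h ` A = h ` (B - A)"
    using inj_on_image_set_diff[OF assms(1)] assms(2,3) by auto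
  then have "sym_diff (h ` A) (h ` B) = h ` sym_diff A B" by (simp add: image_Un)
  moreover have "inj_on h (sym_diff A B)" using assms(1)
    by (rule inj_on_subset) (use assms in blast)
  ultimately show ?thesis by (simp add: card_image)
qed

lemma sym_diff_eq_singletonD:
  assumes "sym_diff A B = {q}"
  shows "q \<in> A \<and> B = A - {q} \<or> q \<in> B \<and> A = B - {q}"
proof -
  have q: "(w \<in> A \<and> w \<notin> B \<or> w \<in> B \<and> w \<notin> A) \<longleftrightarrow> w = q" for w
    using assms by (simp add: set_eq_iff)
  consider "q \<in> A" "q \<notin> B" | "q \<in> B" "q \<notin> A" using q[of q] by blast
  then show ?thesis
  proof cases
    case 1
    have "B = A - {q}"
    proof (intro equalityI subsetI)
      fix w assume "w \<in> B" then show "w \<in> A - {q}" using q[of w] 1 by blast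
    next
      fix w assume "w \<in> A - {q}" then show "w \<in> B" using q[of w] by blast
    qed
    then show ?thesis using 1 by blast
  next
    case 2
    have "A = B - {q}"
    proof (intro equalityI subsetI)
      fix w assume "w \<in> A" then show "w \<in> B - {q}" using q[of w] 2 by blast
    next
      fix w assume "w \<in> B - {q}" then show "w \<in> A" using q[of w] by blast
    qed
    then show ?thesis using 2 by blast
  qed
qed

lemma graph_iso_cube_if_bij_Pow:
  assumes f: "bij_betw f V (Pow S)" and S: "finite S" "card S = n"
    and adj: "\<And>u v. u \<in> V \<Longrightarrow> v \<in> V \<Longrightarrow> E u v \<longleftrightarrow> card (sym_diff (f u) (f v)) = 1"
  shows "graph_iso_cube V E n"
proof -
  obtain h where h: "bij_betw h S {..<n}"
    using S by (metis card_lessThan finite_lessThan finite_same_card_bij)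
  have "bij_betw (image h \<circ> f) V (cube_vertices n)"
    unfolding cube_vertices_def using f bij_betw_image_Pow[OF h] by (rule bij_betw_trans)
  moreover have "E u v \<longleftrightarrow> cube_adj ((image h \<circ> f) u) ((image h \<circ> f) v)" if "u \<in> V" "v \<in> V" for u v
  proof -
    have "f u \<subseteq> S" "f v \<subseteq> S" using f that bij_betwE by blast+
    then show ?thesis
      using adj[OF that] card_sym_diff_image[of h S "f u" "f v"] h
      by (simp add: bij_betw_def cube_adj_def)
  qed
  ultimately show ?thesis unfolding graph_iso_cube_def by blast
qed

section \<open>Distances in connected graphs\<close>

locale connected_simple_graph =
  fixes V :: "'a set" and E :: "'a \<Rightarrow> 'a \<Rightarrow> bool"
  assumes simple: "simple_graph V E" and connected: "connected_graph V E"
begin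

abbreviation \<Gamma> :: "'a \<Rightarrow> 'a set" where "\<Gamma> \<equiv> nbrs V E"
abbreviation d :: "'a \<Rightarrow> 'a \<Rightarrow> nat" where "d \<equiv> gdist V E"
abbreviation walk :: "'a \<Rightarrow> 'a \<Rightarrow> nat \<Rightarrow> bool" where "walk \<equiv> walk_of_length V E"

lemma finite_V: "finite V"
  using simple by (simp add: simple_graph_def)

lemma adj_in_V: assumes "E x y" shows "x \<in> V" "y \<in> V"
  using simple assms by (simp_all add: simple_graph_def)

lemma adj_sym: "E x y \<Longrightarrow> E y x"
  using simple by (simp add: simple_graph_def)

lemma adj_irrefl: "\<not> E x x"
  using simple by (simp add: simple_graph_def)

lemma in_nbrs_iff [simp]: "y \<in> \<Gamma> x \<longleftrightarrow> E x y"
  using adj_in_V by (auto simp: nbrs_def)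

lemma nbrs_subset_V: "\<Gamma> x \<subseteq> V"
  by (auto simp: nbrs_def)

lemma finite_nbrs [simp]: "finite (\<Gamma> x)"
  using finite_V nbrs_subset_V by (rule finite_subset[rotated])

lemma walk_0: "x \<in> V \<Longrightarrow> walk x x 0"
  unfolding walk_of_length_def by (rule exI[of _ "[x]"]) auto

lemma walk_0_eq: "walk x y 0 \<Longrightarrow> x = y"
  unfolding walk_of_length_def by (auto simp: length_Suc_conv)

lemma walk_in_V: "walk x y n \<Longrightarrow> x \<in> V \<and> y \<in> V"
  unfolding walk_of_length_def
  by (metis hd_in_set last_in_set length_0_conv nat.distinct(1) subsetD)

lemma walk_snoc:
  assumes "walk x y n" "E y y'" shows "walk x y' (Suc n)"
proof -
  obtain p where p: "length p = Suc n" "set p \<subseteq> V" "hd p = x" "last p = y"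
      "\<forall>i<n. E (p ! i) (p ! Suc i)"
    using assms(1) unfolding walk_of_length_def by blast
  have "p ! n = y"
    using p(1,4) by (metis diff_Suc_1 last_conv_nth list.size(3) nat.distinct(1))
  then have "\<forall>i<Suc n. E ((p @ [y']) ! i) ((p @ [y']) ! Suc i)"
    using p(1,5) assms(2) by (auto simp: nth_append less_Suc_eq)
  moreover have "hd (p @ [y']) = x"
    using p(1,3) by (cases p) auto
  ultimately show ?thesis
    unfolding walk_of_length_def using p(1,2) adj_in_V(2)[OF assms(2)]
    by (intro exI[of _ "p @ [y']"]) auto
qed

lemma walk_Cons:
  assumes "E x' x" "walk x y n" shows "walk x' y (Suc n)"
proof -
  obtain p where p: "length p = Suc n" "set p \<subseteq> V" "hd p = x" "last p = y"
      "\<forall>i<n. E (p ! i) (p ! Suc i)"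
    using assms(2) unfolding walk_of_length_def by blast
  have "p ! 0 = x" using p(1,3) by (cases p) auto
  then have "\<forall>i<Suc n. E ((x' # p) ! i) ((x' # p) ! Suc i)"
    using p(5) assms(1) by (auto simp: less_Suc_eq_0_disj)
  then show ?thesis
    unfolding walk_of_length_def using p adj_in_V(1)[OF assms(1)]
    by (intro exI[of _ "x' # p"]) auto
qed

lemma walk_SucE:
  assumes "walk x y (Suc n)" obtains y' where "walk x y' n" "E y' y"
proof -
  obtain p where p: "length p = Suc (Suc n)" "set p \<subseteq> V" "hd p = x" "last p = y"
      "\<forall>i<Suc n. E (p ! i) (p ! Suc i)"
    using assms unfolding walk_of_length_def by blast
  define q where "q = butlast p"
  have q: "length q = Suc n" "\<And>i. i < Suc n \<Longrightarrow> q ! i = p ! i"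
    using p(1) by (simp_all add: q_def nth_butlast)
  have "walk x (q ! n) n"
    unfolding walk_of_length_def
  proof (intro exI[of _ q] conjI)
    show "set q \<subseteq> V" using p(2) in_set_butlastD q_def by fastforce
    show "hd q = x" using p(1,3) q by (metis hd_conv_nth list.size(3) nat.distinct(1) zero_less_Suc)
    show "last q = q ! n" using q(1) by (cases q rule: rev_cases) auto
  qed (use q p(5) in auto)
  moreover have "E (q ! n) y"
    using p(1,4,5) q(2) by (metis diff_Suc_1 last_conv_nth lessI list.size(3) nat.distinct(1))
  ultimately show thesis by (rule that)
qed

lemma walk_rev: "walk x y n \<Longrightarrow> walk y x n"
proof (induction n arbitrary: y)
  case 0
  then show ?case using walk_0_eq walk_in_V by blast
next
  case (Suc n)
  obtain y' where "walk x y' n" "E y' y" using Suc.prems by (rule walk_SucE)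
  then show ?case using Suc.IH walk_Cons adj_sym by blast
qed

lemma walk_gdist: "x \<in> V \<Longrightarrow> y \<in> V \<Longrightarrow> walk x y (d x y)"
  using connected unfolding gdist_def connected_graph_def by (metis LeastI_ex)

lemma gdist_le_walk: "walk x y n \<Longrightarrow> d x y \<le> n"
  unfolding gdist_def by (rule Least_le)

lemma gdist_sym: "d x y = d y x"
proof -
  have "walk x y = walk y x" by (intro ext iffI; erule walk_rev)
  then show ?thesis unfolding gdist_def by simp
qed

lemma gdist_self [simp]: "x \<in> V \<Longrightarrow> d x x = 0"
  using gdist_le_walk[OF walk_0] by simp

lemma gdist_eq_0_iff: "x \<in> V \<Longrightarrow> y \<in> V \<Longrightarrow> d x y = 0 \<longleftrightarrow> x = y"
  using walk_gdist walk_0_eq by fastforce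

lemma gdist_adj_le:
  assumes "x \<in> V" "E y y'" shows "d x y' \<le> Suc (d x y)"
proof -
  have "walk x y (d x y)" using walk_gdist assms adj_in_V by blast
  then have "walk x y' (Suc (d x y))" using assms(2) by (rule walk_snoc)
  then show ?thesis by (rule gdist_le_walk)
qed

lemma gdist_SucE:
  assumes "x \<in> V" "y \<in> V" "d x y = Suc n" obtains y' where "E y' y" "d x y' = n"
proof -
  obtain y' where y': "walk x y' n" "E y' y"
    using walk_gdist[OF assms(1,2)] assms(3) walk_SucE by metis
  have "d x y' \<le> n" using y'(1) by (rule gdist_le_walk)
  moreover have "d x y \<le> Suc (d x y')" using assms(1) y'(2) by (rule gdist_adj_le)
  ultimately show thesis using that y'(2) assms(3) by simp
qed

lemma gdist_adj: assumes "E x y" shows "d x y = 1"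
proof -
  have "x \<in> V" "y \<in> V" using adj_in_V assms by auto
  moreover have "x \<noteq> y" using assms adj_irrefl by blast
  ultimately show ?thesis using gdist_adj_le[of x x y] assms gdist_eq_0_iff by fastforce
qed

lemma gdist_eq_1_iff: assumes "x \<in> V" "y \<in> V" shows "d x y = 1 \<longleftrightarrow> E x y"
proof
  assume "d x y = 1"
  then obtain y' where "E y' y" "d x y' = 0" using gdist_SucE assms by (metis One_nat_def)
  then show "E x y" using gdist_eq_0_iff assms(1) adj_in_V by metis
qed (rule gdist_adj)

lemma gdist_triangle:
  assumes "x \<in> V" "y \<in> V" "z \<in> V" shows "d x z \<le> d x y + d y z"
  using assms(3)
proof (induction "d y z" arbitrary: z)
  case 0
  then show ?case using assms(2) gdist_eq_0_iff by fastforce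
next
  case (Suc n)
  obtain z' where z': "E z' z" "d y z' = n" using gdist_SucE[OF assms(2) Suc.prems] Suc.hyps(2)
    by metis
  have "d x z' \<le> d x y + n" using Suc.hyps(1) z'(2) adj_in_V(1)[OF z'(1)] by metis
  moreover have "d x z \<le> Suc (d x z')" using assms(1) z'(1) by (rule gdist_adj_le)
  ultimately show ?case using Suc.hyps(2) by simp
qed

lemma gdist_eq_2I:
  assumes "x \<in> V" "y \<in> V" "x \<noteq> y" "\<not> E x y" "E x w" "E w y" shows "d x y = 2"
  using gdist_adj_le[OF assms(1,6)] gdist_adj[OF assms(5)] gdist_eq_0_iff[OF assms(1,2)]
    gdist_eq_1_iff[OF assms(1,2)] assms(3,4) by simp

lemma diameter_attained:
  obtains x z where "x \<in> V" "z \<in> V" "d x z = diameter V E"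
proof -
  define D where "D = (\<lambda>(x, z). d x z) ` (V \<times> V)"
  have "V \<noteq> {}" using connected by (simp add: connected_graph_def)
  then have "Max D \<in> D" unfolding D_def using finite_V by (intro Max_in) auto
  moreover have "diameter V E = Max D"
    unfolding diameter_def D_def by (rule arg_cong[where f = Max]) auto
  ultimately show thesis using that unfolding D_def by auto
qed

definition closer_nbrs :: "'a \<Rightarrow> 'a \<Rightarrow> 'a set" where
  "closer_nbrs x v = {t \<in> \<Gamma> v. Suc (d x t) = d x v}"

lemma in_closer_nbrs_iff [simp]: "t \<in> closer_nbrs x v \<longleftrightarrow> E v t \<and> Suc (d x t) = d x v"
  by (simp add: closer_nbrs_def)

lemma closer_nbrs_subset_nbrs: "closer_nbrs x v \<subseteq> \<Gamma> v"
  by (auto simp: closer_nbrs_def)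

lemma finite_closer_nbrs [simp]: "finite (closer_nbrs x v)"
  using closer_nbrs_subset_nbrs finite_nbrs by (rule finite_subset)

lemma closer_nbr_in_V: "c \<in> closer_nbrs x v \<Longrightarrow> c \<in> V"
  using adj_in_V(2) by auto

lemma closer_nbrs_dist2:
  assumes "x \<in> V" "d x v = 2" shows "closer_nbrs x v = \<Gamma> x \<inter> \<Gamma> v"
  using assms gdist_eq_1_iff adj_in_V adj_sym by (auto simp: closer_nbrs_def)

lemma card_le_common_nbrs: "S \<subseteq> \<Gamma> a \<inter> \<Gamma> b \<Longrightarrow> card S \<le> card (\<Gamma> a \<inter> \<Gamma> b)"
  by (simp add: card_mono)

definition layer :: "'a \<Rightarrow> 'a \<Rightarrow> nat \<Rightarrow> nat \<Rightarrow> 'a set" where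
  "layer x z i j = {v \<in> V. d x v = i \<and> d v z = j}"

lemma in_layer_iff: "v \<in> layer x z i j \<longleftrightarrow> v \<in> V \<and> d x v = i \<and> d v z = j"
  by (simp add: layer_def)

lemma layer_swap: "layer z x i j = layer x z j i"
  unfolding layer_def using gdist_sym by blast

definition first_steps :: "'a \<Rightarrow> 'a \<Rightarrow> 'a set" where
  "first_steps x v = {w \<in> \<Gamma> x. d w v < d x v}"

lemma first_steps_subset: "first_steps x v \<subseteq> \<Gamma> x"
  by (auto simp: first_steps_def)

lemma finite_first_steps [simp]: "finite (first_steps x v)"
  using first_steps_subset finite_nbrs by (rule finite_subset)

lemma first_steps_self: "x \<in> V \<Longrightarrow> first_steps x x = {}"
  by (simp add: first_steps_def)

lemma first_steps_adj: assumes "E x v" shows "first_steps x v = {v}"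
proof -
  have V: "x \<in> V" "v \<in> V" using adj_in_V assms by blast+
  have "w \<in> first_steps x v \<longleftrightarrow> w = v" for w
  proof
    assume "w \<in> first_steps x v"
    then have "E x w" "d w v = 0" using gdist_adj[OF assms] by (auto simp: first_steps_def)
    then show "w = v" using gdist_eq_0_iff adj_in_V(2) V(2) by blast
  qed (use assms V gdist_adj in \<open>auto simp: first_steps_def\<close>)
  then show ?thesis by blast
qed

lemma first_steps_mono:
  assumes "x \<in> V" "c \<in> closer_nbrs x v" shows "first_steps x c \<subseteq> first_steps x v"
proof
  fix w assume w: "w \<in> first_steps x c"
  then have "w \<in> V" using first_steps_subset nbrs_subset_V by blast
  then have "d w v \<le> Suc (d w c)" using gdist_adj_le assms(2) adj_sym by simp
  then show "w \<in> first_steps x v" using w assms(2) by (auto simp: first_steps_def)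
qed

end

section \<open>Amply regular graphs\<close>

locale amply_regular_graph = connected_simple_graph +
  fixes k lam mu :: nat
  assumes regular: "x \<in> V \<Longrightarrow> card (\<Gamma> x) = k"
    and common_adj: "E x y \<Longrightarrow> card (\<Gamma> x \<inter> \<Gamma> y) = lam"
    and common_dist2: "x \<in> V \<Longrightarrow> y \<in> V \<Longrightarrow> d x y = 2 \<Longrightarrow> card (\<Gamma> x \<inter> \<Gamma> y) = mu"

lemma amply_regular_graphI:
  assumes "amply_regular V E v k lam mu" "connected_graph V E"
  shows "amply_regular_graph V E k lam mu"
proof -
  interpret connected_simple_graph V E
    using assms by unfold_locales (simp_all add: amply_regular_def)
  show ?thesis
    using assms(1) adj_in_V by unfold_locales (auto simp: amply_regular_def)
qed

context amply_regular_graph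
begin

lemma card_common_nbrs_le:
  assumes "a \<in> V" "b \<in> V" "a \<noteq> b" shows "card (\<Gamma> a \<inter> \<Gamma> b) \<le> max lam mu"
proof (cases "E a b \<or> \<Gamma> a \<inter> \<Gamma> b = {}")
  case True
  then show ?thesis using common_adj by auto
next
  case False
  then obtain w where "E a w" "E b w" "\<not> E a b" by auto
  then have "d a b = 2" using gdist_eq_2I assms adj_sym by blast
  then show ?thesis using common_dist2 assms by simp
qed

text \<open>If \<open>\<lambda> \<ge> k - 2\<close>, every neighbour of a common neighbour \<open>w\<close> of \<open>x\<close> and \<open>c\<close>, other than
  \<open>x\<close> and \<open>c\<close>, is adjacent to both of them.\<close>

lemma mu_large_if_lam_large:
  assumes "x \<in> V" "c \<in> V" "d x c = 2" and lam: "k \<le> lam + 2"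
  shows "k \<le> mu + 1"
proof -
  obtain w where w: "E x w" "E w c"
    using assms(1,2,3) gdist_SucE gdist_eq_1_iff adj_in_V
    by (metis One_nat_def Suc_1)
  have wV: "w \<in> V" using adj_in_V w by blast
  have xc: "x \<noteq> c" "\<not> E x c" using assms(1,3) gdist_adj by force+
  have card_rest: "card (\<Gamma> w - {x, c}) = k - 2"
    using w xc regular[OF wV] adj_sym by (simp add: card_Diff_subset)
  have "\<Gamma> w \<inter> \<Gamma> y = \<Gamma> w - {x, c}" if "y \<in> {x, c}" for y
  proof (rule card_seteq)
    show "\<Gamma> w \<inter> \<Gamma> y \<subseteq> \<Gamma> w - {x, c}"
      using that xc adj_irrefl adj_sym by auto
    show "card (\<Gamma> w - {x, c}) \<le> card (\<Gamma> w \<inter> \<Gamma> y)"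
      using that card_rest lam common_adj w adj_sym by auto
  qed simp
  then have "insert w (\<Gamma> w - {x, c}) \<subseteq> \<Gamma> x \<inter> \<Gamma> c"
    using w adj_sym by auto
  then have "card (insert w (\<Gamma> w - {x, c})) \<le> mu"
    using card_le_common_nbrs common_dist2[OF assms(1-3)] by metis
  then show ?thesis using card_rest adj_irrefl by simp
qed

lemma common_nbr_dist3:
  assumes "x \<in> V" "y \<in> V" "d x y = 3" "c \<in> closer_nbrs x y" "E x w" "E w c"
  shows "d w y = 2" "\<Gamma> w \<inter> \<Gamma> y \<subseteq> closer_nbrs x y"
proof -
  have wV: "w \<in> V" using adj_in_V assms(5) by blast
  have "d w y \<le> 2" using gdist_adj_le[OF wV, of c y] gdist_adj[OF assms(6)] assms(4) adj_sym by simp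
  moreover have "d x y \<le> d x w + d w y" using gdist_triangle assms(1,2) wV by blast
  ultimately show "d w y = 2" using gdist_adj[OF assms(5)] assms(3) by simp
  show "\<Gamma> w \<inter> \<Gamma> y \<subseteq> closer_nbrs x y"
  proof
    fix t assume t: "t \<in> \<Gamma> w \<inter> \<Gamma> y"
    have "d x t \<le> 2" using gdist_adj_le[OF assms(1), of w t] t gdist_adj[OF assms(5)] by simp
    moreover have "d x y \<le> Suc (d x t)" using gdist_adj_le[OF assms(1), of t y] t adj_sym by auto
    ultimately show "t \<in> closer_nbrs x y" using t assms(3) by auto
  qed
qed

lemma mu_le_card_closer_nbrs_dist3:
  assumes "x \<in> V" "y \<in> V" "d x y = 3" shows "mu \<le> card (closer_nbrs x y)"
proof -
  obtain c where c: "E c y" "d x c = 2"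
    using gdist_SucE[OF assms(1,2)] assms(3) by (metis numeral_2_eq_2 numeral_3_eq_3)
  then have cV: "c \<in> V" using adj_in_V by blast
  obtain w where w: "E x w" "E w c"
    using gdist_SucE[OF assms(1) cV] c(2) gdist_eq_1_iff adj_in_V assms(1)
      by (metis One_nat_def Suc_1)
  have "c \<in> closer_nbrs x y" using c assms(3) adj_sym by simp
  then have "d w y = 2" "\<Gamma> w \<inter> \<Gamma> y \<subseteq> closer_nbrs x y"
    using common_nbr_dist3 assms w by blast+
  then show ?thesis using common_dist2 adj_in_V(2)[OF w(1)] assms(2)
    by (metis card_mono finite_closer_nbrs)
qed

context
  fixes x y c
  assumes xy: "x \<in> V" "y \<in> V" "d x y = 3" and card_eq: "card (closer_nbrs x y) = mu"
    and c: "c \<in> closer_nbrs x y"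
begin

lemma common_nbrs_dist3_eq_mu:
  assumes "w \<in> \<Gamma> x \<inter> \<Gamma> c" shows "\<Gamma> w \<inter> \<Gamma> y = closer_nbrs x y"
proof (rule card_seteq)
  have w: "E x w" "E w c" using assms adj_sym by auto
  show "\<Gamma> w \<inter> \<Gamma> y \<subseteq> closer_nbrs x y" using common_nbr_dist3(2)[OF xy c w] .
  show "card (closer_nbrs x y) \<le> card (\<Gamma> w \<inter> \<Gamma> y)"
    using common_nbr_dist3(1)[OF xy c w] common_dist2 adj_in_V(2)[OF w(1)] xy(2) card_eq by simp
qed simp

lemma clique_dist3_eq_mu:
  assumes w: "w1 \<in> \<Gamma> x \<inter> \<Gamma> c" "w2 \<in> \<Gamma> x \<inter> \<Gamma> c" "w1 \<noteq> w2" shows "E w1 w2"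
proof (rule ccontr)
  assume "\<not> E w1 w2"
  have x: "E x w1" "E x w2" using w by auto
  then have V12: "w1 \<in> V" "w2 \<in> V" using adj_in_V by blast+
  have "d w1 w2 = 2" using gdist_eq_2I[OF V12 w(3) \<open>\<not> E w1 w2\<close> adj_sym[OF x(1)] x(2)] .
  then have "card (\<Gamma> w1 \<inter> \<Gamma> w2) = mu" using common_dist2 V12 by blast
  moreover have "insert x (closer_nbrs x y) \<subseteq> \<Gamma> w1 \<inter> \<Gamma> w2"
    using common_nbrs_dist3_eq_mu[OF w(1)] common_nbrs_dist3_eq_mu[OF w(2)] x adj_sym by auto
  then have "card (insert x (closer_nbrs x y)) \<le> card (\<Gamma> w1 \<inter> \<Gamma> w2)"
    by (rule card_le_common_nbrs)
  ultimately show False using xy card_eq by simp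
qed

end

text \<open>Two distinct common neighbours of \<open>x\<close> and \<open>c\<close> are adjacent and share \<open>x\<close>, the \<open>\<mu>\<close> vertices
  of \<open>closer_nbrs x y\<close> and the other \<open>\<mu> - 2\<close> common neighbours of \<open>x\<close> and \<open>c\<close>.\<close>

lemma lam_ge_if_card_closer_nbrs_dist3_eq_mu:
  assumes mu: "2 \<le> mu" and xy: "x \<in> V" "y \<in> V" "d x y = 3"
    and card_S: "card (closer_nbrs x y) = mu"
  shows "2 * mu \<le> lam + 1"
proof -
  define S where "S = closer_nbrs x y"
  obtain c where c: "E c y" "d x c = 2"
    using gdist_SucE[OF xy(1,2)] xy(3) by (metis numeral_2_eq_2 numeral_3_eq_3)
  then have cV: "c \<in> V" and cS: "c \<in> closer_nbrs x y" using adj_in_V adj_sym xy(3) by auto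
  define Q where "Q = \<Gamma> x \<inter> \<Gamma> c"
  have card_Q: "card Q = mu" unfolding Q_def using common_dist2[OF xy(1) cV c(2)] .
  obtain w1 w2 where w12: "w1 \<in> Q" "w2 \<in> Q" "w1 \<noteq> w2"
    using card_Q mu card_ge_2E by metis
  note clique = clique_dist3_eq_mu[OF xy card_S cS, folded Q_def]
  note Q_S = common_nbrs_dist3_eq_mu[OF xy card_S cS, folded Q_def S_def]
  have "x \<in> \<Gamma> w1 \<inter> \<Gamma> w2" using w12 adj_sym by (auto simp: Q_def)
  moreover have "S \<subseteq> \<Gamma> w1 \<inter> \<Gamma> w2" using Q_S[OF w12(1)] Q_S[OF w12(2)] by blast
  moreover have "Q - {w1, w2} \<subseteq> \<Gamma> w1 \<inter> \<Gamma> w2"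
  proof
    fix t assume "t \<in> Q - {w1, w2}"
    then show "t \<in> \<Gamma> w1 \<inter> \<Gamma> w2"
      using clique[OF w12(1), of t] clique[OF w12(2), of t] by auto
  qed
  ultimately have "insert x (S \<union> (Q - {w1, w2})) \<subseteq> \<Gamma> w1 \<inter> \<Gamma> w2" by blast
  then have le: "card (insert x (S \<union> (Q - {w1, w2}))) \<le> lam"
    using card_le_common_nbrs common_adj[OF clique[OF w12]] by metis
  have "card (Q - {w1, w2}) = mu - 2"
    using w12 card_Q by (simp add: card_Diff_subset Q_def)
  moreover have "Q \<inter> S = {}" using gdist_adj xy(3) by (auto simp: S_def Q_def)
  ultimately have "card (S \<union> (Q - {w1, w2})) = mu + (mu - 2)"
    using card_S by (subst card_Un_disjoint) (auto simp: S_def Q_def)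
  moreover have "x \<notin> S \<union> (Q - {w1, w2})" using xy adj_irrefl by (simp add: S_def Q_def)
  ultimately have "Suc (mu + (mu - 2)) \<le> lam" using le by (simp add: S_def Q_def)
  then show ?thesis using mu by simp
qed

end

section \<open>Recognising the cube\<close>

locale cube_like_graph = connected_simple_graph +
  fixes x z :: 'a
  assumes x_in_V: "x \<in> V" and z_in_V: "z \<in> V"
    and common_nbrs_le_2: "a \<in> V \<Longrightarrow> b \<in> V \<Longrightarrow> a \<noteq> b \<Longrightarrow> card (\<Gamma> a \<inter> \<Gamma> b) \<le> 2"
    and common_nbrs_dist2: "a \<in> V \<Longrightarrow> b \<in> V \<Longrightarrow> d a b = 2 \<Longrightarrow> card (\<Gamma> a \<inter> \<Gamma> b) = 2"
    and adj_dist_Suc: "E v w \<Longrightarrow> Suc (d x v) = d x w \<or> Suc (d x w) = d x v"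
    and card_closer_nbrs: "v \<in> V \<Longrightarrow> card (closer_nbrs x v) = d x v"
    and dist_x_z: "d x z = card (\<Gamma> x)"
begin

lemma eq_if_three_common_nbrs:
  assumes "a \<in> V" "b \<in> V" "{p, q, r} \<subseteq> \<Gamma> a \<inter> \<Gamma> b" "p \<noteq> q" "p \<noteq> r" "q \<noteq> r"
  shows "a = b"
proof (rule ccontr)
  assume "a \<noteq> b"
  then have "card {p, q, r} \<le> 2"
    using card_le_common_nbrs[OF assms(3)] common_nbrs_le_2[OF assms(1,2)] by linarith
  then show False using assms(4-6) by simp
qed

lemma other_common_closer_nbr:
  assumes c: "c \<in> closer_nbrs x v" and s: "s \<in> closer_nbrs x c"
  obtains c' where "c' \<in> closer_nbrs x v" "c' \<noteq> c" "E s c'"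
proof -
  have cs: "E v c" "E c s" "Suc (d x c) = d x v" "Suc (d x s) = d x c" using c s by auto
  have V: "s \<in> V" "v \<in> V" using adj_in_V cs by blast+
  have "s \<noteq> v" "\<not> E s v" using cs adj_dist_Suc[of s v] by auto
  then have "d s v = 2" using gdist_eq_2I[OF V _ _ adj_sym[OF cs(2)] adj_sym[OF cs(1)]] by blast
  then have "card (\<Gamma> s \<inter> \<Gamma> v) = 2" using common_nbrs_dist2 V by blast
  moreover have "c \<in> \<Gamma> s \<inter> \<Gamma> v" using cs adj_sym by auto
  ultimately have "card (\<Gamma> s \<inter> \<Gamma> v - {c}) = 1" by simp
  then obtain c' where c': "\<Gamma> s \<inter> \<Gamma> v - {c} = {c'}" by (rule card_1_singletonE)
  then have "c' \<in> \<Gamma> s \<inter> \<Gamma> v - {c}" by blast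
  then have "E s c'" "E v c'" "c' \<noteq> c" by simp_all
  moreover have "Suc (d x c') = d x v"
    using adj_dist_Suc[OF \<open>E s c'\<close>] adj_dist_Suc[OF \<open>E v c'\<close>] cs by linarith
  ultimately show thesis using that by simp
qed

text \<open>Given \<open>s\<close> below \<open>c\<^sub>1\<close>, the second common neighbour of \<open>s\<close> and \<open>v\<close> defines an injection
  from \<open>closer_nbrs x c\<^sub>1\<close> into \<open>closer_nbrs x v - {c\<^sub>1}\<close>; both sets have \<open>d x v - 1\<close> elements.\<close>

lemma common_closer_nbr:
  assumes v: "v \<in> V" and c: "c1 \<in> closer_nbrs x v" "c2 \<in> closer_nbrs x v" "c1 \<noteq> c2"
  obtains s where "s \<in> closer_nbrs x c1" "s \<in> closer_nbrs x c2"
proof -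
  define other where
    "other s = (SOME c. c \<in> closer_nbrs x v \<and> c \<noteq> c1 \<and> E s c)" for s
  have other: "other s \<in> closer_nbrs x v - {c1}" "E s (other s)" if s: "s \<in> closer_nbrs x c1" for s
  proof -
    obtain c' where "c' \<in> closer_nbrs x v" "c' \<noteq> c1" "E s c'"
      using other_common_closer_nbr[OF c(1) s] .
    then have "\<exists>c. c \<in> closer_nbrs x v \<and> c \<noteq> c1 \<and> E s c" by blast
    then have "other s \<in> closer_nbrs x v \<and> other s \<noteq> c1 \<and> E s (other s)"
      unfolding other_def by (rule someI_ex)
    then show "other s \<in> closer_nbrs x v - {c1}" "E s (other s)" by simp_all
  qed
  have inj: "inj_on other (closer_nbrs x c1)"
  proof (rule inj_onI, rule ccontr)
    fix s1 s2
    assume s: "s1 \<in> closer_nbrs x c1" "s2 \<in> closer_nbrs x c1" "other s1 = other s2" "s1 \<noteq> s2"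
    have "E c1 v" "E c1 s1" "E c1 s2" using c(1) s(1,2) adj_sym by simp_all
    moreover have "E (other s1) v" "E (other s1) s1" "E (other s1) s2"
      using other[OF s(1)] other(2)[OF s(2)] s(3) adj_sym by simp_all
    ultimately have "{v, s1, s2} \<subseteq> \<Gamma> c1 \<inter> \<Gamma> (other s1)" by simp
    moreover have "v \<noteq> s1" "v \<noteq> s2" using s(1,2) c(1) by auto
    ultimately have "c1 = other s1"
      using eq_if_three_common_nbrs closer_nbr_in_V c(1) other(1)[OF s(1)] s(4) by (meson DiffD1)
    then show False using other(1)[OF s(1)] by blast
  qed
  have card_eq: "card (closer_nbrs x c1) = card (closer_nbrs x v - {c1})"
    using card_closer_nbrs[OF closer_nbr_in_V[OF c(1)]] card_closer_nbrs[OF v] c(1)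
    by (simp; linarith)
  have "other ` closer_nbrs x c1 = closer_nbrs x v - {c1}"
  proof (rule card_seteq)
    show "other ` closer_nbrs x c1 \<subseteq> closer_nbrs x v - {c1}" using other(1) by blast
    show "card (closer_nbrs x v - {c1}) \<le> card (other ` closer_nbrs x c1)"
      using card_image[OF inj] card_eq by simp
  qed simp
  then obtain s where s: "s \<in> closer_nbrs x c1" "other s = c2" using c
    by (metis Diff_iff imageE singletonD)
  then have "s \<in> closer_nbrs x c2" using other(2)[OF s(1)] s(1) c adj_sym by simp
  then show thesis using that s(1) by blast
qed

abbreviation sphere :: "nat \<Rightarrow> 'a set" where
  "sphere i \<equiv> {v \<in> V. d x v = i}"

lemma first_steps_Union:
  assumes v: "v \<in> V" "2 \<le> d x v"
  shows "first_steps x v = (\<Union>c\<in>closer_nbrs x v. first_steps x c)"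
proof
  show "(\<Union>c\<in>closer_nbrs x v. first_steps x c) \<subseteq> first_steps x v"
    using first_steps_mono[OF x_in_V] by blast
  show "first_steps x v \<subseteq> (\<Union>c\<in>closer_nbrs x v. first_steps x c)"
  proof
    fix w assume "w \<in> first_steps x v"
    then have w: "E x w" "d w v < d x v" by (auto simp: first_steps_def)
    have wV: "w \<in> V" using adj_in_V w(1) by blast
    have "d w v \<noteq> 0" using gdist_eq_0_iff[OF wV v(1)] gdist_adj[OF w(1)] v(2) by auto
    then obtain n where n: "d w v = Suc n" using not0_implies_Suc by blast
    obtain c where c: "E c v" "d w c = n" using gdist_SucE[OF wV v(1) n] .
    have "d x c \<le> d x w + d w c" using gdist_triangle[OF x_in_V wV adj_in_V(1)[OF c(1)]] .
    then have "d x c \<le> Suc n" using gdist_adj[OF w(1)] c(2) by simp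
    then have dc: "Suc (d x c) = d x v" using adj_dist_Suc[OF c(1)] w(2) n by linarith
    then have "c \<in> closer_nbrs x v" using adj_sym[OF c(1)] by simp
    moreover have "w \<in> first_steps x c" using w c(2) n dc by (simp add: first_steps_def)
    ultimately show "w \<in> (\<Union>c\<in>closer_nbrs x v. first_steps x c)" by blast
  qed
qed

definition labels_layer :: "nat \<Rightarrow> bool" where
  "labels_layer i \<longleftrightarrow> (\<forall>v \<in> sphere i. card (first_steps x v) = i \<and>
     (\<forall>b \<in> first_steps x v. \<exists>c \<in> closer_nbrs x v. first_steps x c = first_steps x v - {b}))"

context
  fixes v i
  assumes v: "v \<in> V" "d x v = i" and i: "2 \<le> i"
    and labels: "labels_layer (i - 1)" "labels_layer (i - 2)"
    and inj: "inj_on (first_steps x) (sphere (i - 1))" "inj_on (first_steps x) (sphere (i - 2))"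
begin

lemma closer_nbr_step:
  assumes "c \<in> closer_nbrs x v"
  shows "c \<in> sphere (i - 1)" "card (first_steps x c) = i - 1"
proof -
  show c: "c \<in> sphere (i - 1)" using assms closer_nbr_in_V v(2) by auto
  then show "card (first_steps x c) = i - 1" using labels(1) by (simp add: labels_layer_def)
qed

lemma second_closer_nbr_step:
  assumes "c \<in> closer_nbrs x v" "s \<in> closer_nbrs x c"
  shows "s \<in> sphere (i - 2)" "card (first_steps x s) = i - 2"
proof -
  show s: "s \<in> sphere (i - 2)" using assms closer_nbr_in_V v(2) by auto
  then show "card (first_steps x s) = i - 2" using labels(2) by (simp add: labels_layer_def)
qed

lemma meet_step:
  assumes c: "c \<in> closer_nbrs x v" "c' \<in> closer_nbrs x v" "c \<noteq> c'"
  obtains s where "s \<in> closer_nbrs x c" "s \<in> closer_nbrs x c'"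
    "first_steps x s = first_steps x c \<inter> first_steps x c'"
    "card (first_steps x c \<inter> first_steps x c') = i - 2"
proof -
  obtain s where s: "s \<in> closer_nbrs x c" "s \<in> closer_nbrs x c'"
    using common_closer_nbr[OF v(1) c] .
  have sub: "first_steps x s \<subseteq> first_steps x c \<inter> first_steps x c'"
    using first_steps_mono[OF x_in_V] s by blast
  have "first_steps x c \<noteq> first_steps x c'"
    using inj_onD[OF inj(1) _ closer_nbr_step(1)[OF c(1)] closer_nbr_step(1)[OF c(2)]] c(3) by blast
  then have "first_steps x c \<inter> first_steps x c' \<noteq> first_steps x c"
    using card_subset_eq[of "first_steps x c'" "first_steps x c"] closer_nbr_step(2)[OF c(1)]
      closer_nbr_step(2)[OF c(2)] by auto
  then have "card (first_steps x c \<inter> first_steps x c') < card (first_steps x c)"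
    by (intro psubset_card_mono) auto
  then have "card (first_steps x c \<inter> first_steps x c') < i - 1"
    using closer_nbr_step(2)[OF c(1)] by simp
  moreover have "card (first_steps x s) \<le> card (first_steps x c \<inter> first_steps x c')"
    using sub by (simp add: card_mono)
  ultimately have card_meet: "card (first_steps x c \<inter> first_steps x c') = i - 2"
    using second_closer_nbr_step(2)[OF c(1) s(1)] by linarith
  then have "first_steps x s = first_steps x c \<inter> first_steps x c'"
    using card_seteq[OF _ sub] second_closer_nbr_step(2)[OF c(1) s(1)] by simp
  then show thesis using that s card_meet by blast
qed

lemma card_first_steps_Diff_step:
  assumes "c \<in> closer_nbrs x v" "c' \<in> closer_nbrs x v" "c \<noteq> c'"
  shows "card (first_steps x c - first_steps x c') = 1"
proof -
  obtain s where "card (first_steps x c \<inter> first_steps x c') = i - 2"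
    using meet_step[OF assms] .
  then show ?thesis using closer_nbr_step(2)[OF assms(1)] i by (simp add: card_Diff_subset_Int)
qed

text \<open>Two meets coincide only if their witnesses \<open>s\<close> do, and then \<open>s\<close> and \<open>v\<close> would have three
  common neighbours.\<close>

lemma distinct_meets_step:
  assumes c: "c1 \<in> closer_nbrs x v" "c2 \<in> closer_nbrs x v" "c3 \<in> closer_nbrs x v"
    and distinct: "c1 \<noteq> c2" "c1 \<noteq> c3" "c2 \<noteq> c3"
  shows "first_steps x c1 \<inter> first_steps x c2 \<noteq> first_steps x c1 \<inter> first_steps x c3"
proof
  assume eq: "first_steps x c1 \<inter> first_steps x c2 = first_steps x c1 \<inter> first_steps x c3"
  obtain s where s: "s \<in> closer_nbrs x c1" "s \<in> closer_nbrs x c2"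
      "first_steps x s = first_steps x c1 \<inter> first_steps x c2"
    using meet_step[OF c(1,2) distinct(1)] .
  obtain s' where s': "s' \<in> closer_nbrs x c1" "s' \<in> closer_nbrs x c3"
      "first_steps x s' = first_steps x c1 \<inter> first_steps x c3"
    using meet_step[OF c(1,3) distinct(2)] .
  have "s = s'"
    using inj_onD[OF inj(2) _ second_closer_nbr_step(1)[OF c(1) s(1)] second_closer_nbr_step(1)[OF
      c(1) s'(1)]]
      s(3) s'(3) eq by simp
  then have "E s c1" "E s c2" "E s c3" using s(1,2) s'(2) adj_sym by simp_all
  moreover have "E v c1" "E v c2" "E v c3" using c by simp_all
  ultimately have "{c1, c2, c3} \<subseteq> \<Gamma> s \<inter> \<Gamma> v" by simp
  then have "s = v"
    using eq_if_three_common_nbrs[OF closer_nbr_in_V[OF s(1)] v(1) _ distinct] by blast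
  then show False using s(1) c(1) by simp
qed

lemma first_steps_Diff_eq_step:
  assumes c: "c1 \<in> closer_nbrs x v" "c \<in> closer_nbrs x v" "c' \<in> closer_nbrs x v"
    and ne: "c \<noteq> c1" "c' \<noteq> c1"
  shows "first_steps x c - first_steps x c1 = first_steps x c' - first_steps x c1"
proof (rule ccontr)
  assume neq: "first_steps x c - first_steps x c1 \<noteq> first_steps x c' - first_steps x c1"
  then have "c \<noteq> c'" by blast
  obtain e where e: "first_steps x c - first_steps x c1 = {e}"
    using card_first_steps_Diff_step[OF c(2,1) ne(1)] by (rule card_1_singletonE)
  obtain e' where e': "first_steps x c' - first_steps x c1 = {e'}"
    using card_first_steps_Diff_step[OF c(3,1) ne(2)] by (rule card_1_singletonE)
  have "e \<noteq> e'" using e e' neq by auto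
  have sub: "first_steps x c \<inter> first_steps x c' \<subseteq> first_steps x c \<inter> first_steps x c1"
  proof
    fix w assume w: "w \<in> first_steps x c \<inter> first_steps x c'"
    show "w \<in> first_steps x c \<inter> first_steps x c1"
    proof (rule ccontr)
      assume "w \<notin> first_steps x c \<inter> first_steps x c1"
      then have "w \<in> first_steps x c - first_steps x c1" "w \<in> first_steps x c' - first_steps x c1"
        using w by auto
      then show False using e e' \<open>e \<noteq> e'\<close> by auto
    qed
  qed
  obtain s where "card (first_steps x c \<inter> first_steps x c') = i - 2"
    using meet_step[OF c(2,3) \<open>c \<noteq> c'\<close>] .
  moreover obtain s where "card (first_steps x c \<inter> first_steps x c1) = i - 2"
    using meet_step[OF c(2,1) ne(1)] .
  ultimately have "first_steps x c \<inter> first_steps x c' = first_steps x c \<inter> first_steps x c1"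
    using card_seteq[OF _ sub] by simp
  then show False using distinct_meets_step[OF c(2,3,1) \<open>c \<noteq> c'\<close> ne] by blast
qed

lemma card_first_steps_step: "card (first_steps x v) = i"
proof -
  have "2 \<le> card (closer_nbrs x v)" using card_closer_nbrs v i by simp
  then obtain c1 c2 where c: "c1 \<in> closer_nbrs x v" "c2 \<in> closer_nbrs x v" "c1 \<noteq> c2"
    by (rule card_ge_2E)
  have "first_steps x v = first_steps x c1 \<union> (first_steps x c2 - first_steps x c1)"
  proof
    show "first_steps x c1 \<union> (first_steps x c2 - first_steps x c1) \<subseteq> first_steps x v"
      using first_steps_mono[OF x_in_V] c by blast
    show "first_steps x v \<subseteq> first_steps x c1 \<union> (first_steps x c2 - first_steps x c1)"
    proof
      fix w assume "w \<in> first_steps x v"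
      then obtain c where "c \<in> closer_nbrs x v" "w \<in> first_steps x c"
        using first_steps_Union v i by auto
      then show "w \<in> first_steps x c1 \<union> (first_steps x c2 - first_steps x c1)"
        using first_steps_Diff_eq_step[OF c(1) _ c(2) _ c(3)[symmetric]] by (cases "c = c1") auto
    qed
  qed
  moreover have "card (first_steps x c1 \<union> (first_steps x c2 - first_steps x c1))
      = card (first_steps x c1) + card (first_steps x c2 - first_steps x c1)"
    by (rule card_Un_disjoint) auto
  ultimately show ?thesis
    using closer_nbr_step(2)[OF c(1)] card_first_steps_Diff_step[OF c(2,1) c(3)[symmetric]] i
      by simp
qed

lemma first_steps_remove_step:
  assumes b: "b \<in> first_steps x v"
  obtains c where "c \<in> closer_nbrs x v" "first_steps x c = first_steps x v - {b}"
proof -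
  define R where "R = (\<lambda>b. first_steps x v - {b}) ` first_steps x v"
  have "first_steps x ` closer_nbrs x v \<subseteq> R"
  proof
    fix S assume "S \<in> first_steps x ` closer_nbrs x v"
    then obtain c where c: "c \<in> closer_nbrs x v" "S = first_steps x c" by blast
    have "Suc (card (first_steps x c)) = card (first_steps x v)"
      using closer_nbr_step(2)[OF c(1)] card_first_steps_step i by simp
    then obtain a where "a \<in> first_steps x v" "first_steps x c = first_steps x v - {a}"
      by (rule subset_card_Suc_eq_Diff[OF finite_first_steps first_steps_mono[OF x_in_V c(1)]])
    then show "S \<in> R" unfolding R_def c(2) by (rule rev_image_eqI)
  qed
  moreover have "card R \<le> card (first_steps x ` closer_nbrs x v)"
  proof -
    have "inj_on (first_steps x) (closer_nbrs x v)"
      by (rule inj_on_subset[OF inj(1)]) (use closer_nbr_step(1) in blast)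
    then have "card (first_steps x ` closer_nbrs x v) = i"
      using card_closer_nbrs v by (simp add: card_image)
    then show ?thesis
      using card_image_le[of "first_steps x v"] card_first_steps_step by (simp add: R_def)
  qed
  ultimately have "first_steps x ` closer_nbrs x v = R"
    by (rule card_seteq[rotated]) (simp add: R_def)
  moreover have "first_steps x v - {b} \<in> R" using b unfolding R_def by (rule imageI)
  ultimately obtain c where "c \<in> closer_nbrs x v" "first_steps x v - {b} = first_steps x c"
    by (metis imageE)
  then show thesis using that by simp
qed

end

lemma labels_layerD:
  assumes "labels_layer i" "v \<in> V" "d x v = i"
  shows "card (first_steps x v) = i"
    and "b \<in> first_steps x v \<Longrightarrow> \<exists>c\<in>closer_nbrs x v. first_steps x c = first_steps x v - {b}"
  using assms unfolding labels_layer_def by blast+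

lemma labels_layer_0: "labels_layer 0" "inj_on (first_steps x) (sphere 0)"
proof -
  have "sphere 0 = {x}" using x_in_V gdist_eq_0_iff by auto
  then show "labels_layer 0" "inj_on (first_steps x) (sphere 0)"
    using first_steps_self[OF x_in_V] by (auto simp: labels_layer_def)
qed

lemma labels_layer_1: "labels_layer 1" "inj_on (first_steps x) (sphere 1)"
proof -
  have adj: "E x v" if "v \<in> sphere 1" for v
    using that gdist_eq_1_iff[OF x_in_V] by auto
  have "x \<in> closer_nbrs x v" if "v \<in> sphere 1" for v
    using that adj_sym[OF adj[OF that]] x_in_V by simp
  then show "labels_layer 1"
    unfolding labels_layer_def using first_steps_adj[OF adj] first_steps_self[OF x_in_V] by auto
  show "inj_on (first_steps x) (sphere 1)"
    using first_steps_adj[OF adj] by (auto intro!: inj_onI)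
qed

text \<open>Two vertices with the same label would have two common closer neighbours, which in turn
  would have three common neighbours.\<close>

lemma inj_on_sphere_step:
  assumes i: "2 \<le> i" and labels: "labels_layer i" and inj: "inj_on (first_steps x) (sphere (i - 1))"
  shows "inj_on (first_steps x) (sphere i)"
proof (rule inj_onI, rule ccontr)
  fix v1 v2 assume v: "v1 \<in> sphere i" "v2 \<in> sphere i" and eq: "first_steps x v1 = first_steps x v2"
    and ne: "v1 \<noteq> v2"
  have closer_both: "\<exists>c. c \<in> closer_nbrs x v1 \<and> c \<in> closer_nbrs x v2 \<and>
      first_steps x c = first_steps x v1 - {b}" if b: "b \<in> first_steps x v1" for b
  proof -
    obtain c where c: "c \<in> closer_nbrs x v1" "first_steps x c = first_steps x v1 - {b}"
      using labels_layerD(2)[OF labels _ _ b] v(1) by blast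
    obtain c' where c': "c' \<in> closer_nbrs x v2" "first_steps x c' = first_steps x v2 - {b}"
      using labels_layerD(2)[OF labels, of v2 b] v(2) b eq by blast
    have "c \<in> sphere (i - 1)" "c' \<in> sphere (i - 1)"
      using c(1) c'(1) v closer_nbr_in_V[OF c(1)] closer_nbr_in_V[OF c'(1)] by auto
    then have "c = c'" using inj_onD[OF inj] c(2) c'(2) eq by simp
    then show ?thesis using c c' by blast
  qed
  have "2 \<le> card (first_steps x v1)" using labels_layerD(1)[OF labels] v(1) i by simp
  then obtain b1 b2 where b: "b1 \<in> first_steps x v1" "b2 \<in> first_steps x v1" "b1 \<noteq> b2"
    by (rule card_ge_2E)
  obtain c1 where c1: "c1 \<in> closer_nbrs x v1" "c1 \<in> closer_nbrs x v2"
      "first_steps x c1 = first_steps x v1 - {b1}"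
    using closer_both[OF b(1)] by blast
  obtain c2 where c2: "c2 \<in> closer_nbrs x v1" "c2 \<in> closer_nbrs x v2"
      "first_steps x c2 = first_steps x v1 - {b2}"
    using closer_both[OF b(2)] by blast
  have "c1 \<noteq> c2" using c1(3) c2(3) b by blast
  then obtain s where s: "s \<in> closer_nbrs x c1" "s \<in> closer_nbrs x c2"
    using common_closer_nbr c1(1) c2(1) v(1) by blast
  have "E c1 v1" "E c1 v2" "E c1 s" "E c2 v1" "E c2 v2" "E c2 s"
    using c1 c2 s adj_sym by simp_all
  then have "{v1, v2, s} \<subseteq> \<Gamma> c1 \<inter> \<Gamma> c2" by simp
  moreover have "v1 \<noteq> s" "v2 \<noteq> s" using s(1) c1(1,2) by auto
  ultimately have "c1 = c2"
    using eq_if_three_common_nbrs[OF closer_nbr_in_V[OF c1(1)] closer_nbr_in_V[OF c2(1)] _ ne]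
    by blast
  then show False using \<open>c1 \<noteq> c2\<close> by blast
qed

lemma labels_layer_and_inj: "labels_layer i \<and> inj_on (first_steps x) (sphere i)"
proof (induction i rule: less_induct)
  case (less i)
  consider "i = 0" | "i = 1" | "2 \<le> i" by linarith
  then show ?case
  proof cases
    case 3
    then have IH: "labels_layer (i - 1)" "labels_layer (i - 2)"
        "inj_on (first_steps x) (sphere (i - 1))" "inj_on (first_steps x) (sphere (i - 2))"
      using less by auto
    have "labels_layer i"
      unfolding labels_layer_def
      using card_first_steps_step[OF _ _ 3 IH] first_steps_remove_step[OF _ _ 3 IH] by blast
    then show ?thesis using inj_on_sphere_step 3 IH(3) by blast
  qed (use labels_layer_0 labels_layer_1 in auto)
qed

lemma card_first_steps: "v \<in> V \<Longrightarrow> card (first_steps x v) = d x v"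
  using labels_layerD(1) labels_layer_and_inj by blast

lemma first_steps_remove:
  assumes "v \<in> V" "b \<in> first_steps x v"
  obtains c where "c \<in> closer_nbrs x v" "first_steps x c = first_steps x v - {b}"
  using labels_layerD(2) labels_layer_and_inj assms by blast

lemma inj_on_first_steps: "inj_on (first_steps x) V"
proof (rule inj_onI)
  fix u v assume uv: "u \<in> V" "v \<in> V" "first_steps x u = first_steps x v"
  then have "d x u = d x v" using card_first_steps by metis
  then show "u = v" using labels_layer_and_inj[of "d x v"] uv by (auto dest: inj_onD)
qed

lemma first_steps_onto:
  assumes "v \<in> V" "S \<subseteq> first_steps x v" shows "S \<in> first_steps x ` V"
  using assms
proof (induction "card (first_steps x v - S)" arbitrary: v)
  case 0
  then have "first_steps x v = S" by auto
  then show ?case using 0 by blast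
next
  case (Suc n)
  then obtain b where b: "b \<in> first_steps x v - S"
    by (metis card.empty empty_iff ex_in_conv nat.distinct(1))
  obtain c where c: "c \<in> closer_nbrs x v" "first_steps x c = first_steps x v - {b}"
    using first_steps_remove Suc.prems(1) b by blast
  have "n = card (first_steps x c - S)" using Suc.hyps(2) b c(2)
    by (simp add: Diff_insert2[symmetric])
  moreover have "S \<subseteq> first_steps x c" using Suc.prems(2) b c(2) by blast
  ultimately show ?case using Suc.hyps(1) closer_nbr_in_V[OF c(1)] by blast
qed

lemma first_steps_bij: "bij_betw (first_steps x) V (Pow (\<Gamma> x))"
proof -
  have "first_steps x z = \<Gamma> x"
    using card_seteq[OF finite_nbrs first_steps_subset] card_first_steps[OF z_in_V] dist_x_z by simp
  then have "Pow (\<Gamma> x) \<subseteq> first_steps x ` V" using first_steps_onto z_in_V by auto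
  then show ?thesis
    unfolding bij_betw_def using inj_on_first_steps first_steps_subset by blast
qed

lemma card_sym_diff_first_steps_closer_nbr:
  assumes "u \<in> V" "v \<in> closer_nbrs x u"
  shows "card (sym_diff (first_steps x u) (first_steps x v)) = 1"
proof -
  have sub: "first_steps x v \<subseteq> first_steps x u" using first_steps_mono[OF x_in_V assms(2)] .
  then have "sym_diff (first_steps x u) (first_steps x v) = first_steps x u - first_steps x v"
    by blast
  moreover have "Suc (card (first_steps x v)) = card (first_steps x u)"
    using card_first_steps[OF assms(1)] card_first_steps[OF closer_nbr_in_V[OF assms(2)]] assms(2)
    by simp
  ultimately show ?thesis using card_Diff_subset[OF finite_first_steps sub] by simp
qed

lemma adj_if_first_steps_eq_Diff:
  assumes uv: "u \<in> V" "v \<in> V"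
    and q: "q \<in> first_steps x u" "first_steps x v = first_steps x u - {q}"
  shows "E u v"
proof -
  obtain c where c: "c \<in> closer_nbrs x u" "first_steps x c = first_steps x u - {q}"
    using first_steps_remove[OF uv(1) q(1)] .
  have "c = v"
    using inj_onD[OF inj_on_first_steps, of c v] c(2) uv(2) q(2) closer_nbr_in_V[OF c(1)] by simp
  then show ?thesis using c(1) by simp
qed

lemma adj_iff_card_sym_diff_first_steps:
  assumes uv: "u \<in> V" "v \<in> V"
  shows "E u v \<longleftrightarrow> card (sym_diff (first_steps x u) (first_steps x v)) = 1"
proof
  assume "E u v"
  then consider "u \<in> closer_nbrs x v" | "v \<in> closer_nbrs x u"
    using adj_dist_Suc[OF \<open>E u v\<close>] adj_sym[OF \<open>E u v\<close>] by auto
  then show "card (sym_diff (first_steps x u) (first_steps x v)) = 1"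
  proof cases
    case 1
    then show ?thesis using card_sym_diff_first_steps_closer_nbr[OF uv(2)] by (simp add: Un_commute)
  next
    case 2
    then show ?thesis by (rule card_sym_diff_first_steps_closer_nbr[OF uv(1)])
  qed
next
  assume "card (sym_diff (first_steps x u) (first_steps x v)) = 1"
  then obtain q where q: "sym_diff (first_steps x u) (first_steps x v) = {q}"
    by (rule card_1_singletonE)
  then consider "q \<in> first_steps x u" "first_steps x v = first_steps x u - {q}"
    | "q \<in> first_steps x v" "first_steps x u = first_steps x v - {q}"
    using sym_diff_eq_singletonD[OF q] by blast
  then show "E u v"
  proof cases
    case 1
    then show ?thesis using adj_if_first_steps_eq_Diff[OF uv] by blast
  next
    case 2
    then show ?thesis using adj_if_first_steps_eq_Diff[OF uv(2,1)] adj_sym by blast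
  qed
qed

theorem graph_iso_cube: "graph_iso_cube V E (card (\<Gamma> x))"
  by (rule graph_iso_cube_if_bij_Pow[OF first_steps_bij finite_nbrs refl
        adj_iff_card_sym_diff_first_steps])

end

section \<open>Diameter five and \<open>\<mu> = (k - 1) / 2\<close>\<close>

locale distance_five_pair = amply_regular_graph +
  fixes x z :: 'a
  assumes k_eq: "k = 2 * mu + 1" and mu_ge_2: "2 \<le> mu"
    and x_in_V: "x \<in> V" and z_in_V: "z \<in> V" and dist_x_z: "d x z = 5"
begin

abbreviation D23 :: "'a set" where "D23 \<equiv> layer x z 2 3"
abbreviation D32 :: "'a set" where "D32 \<equiv> layer x z 3 2"

lemma swap: "distance_five_pair V E k lam mu z x"
  using amply_regular_graph_axioms k_eq mu_ge_2 x_in_V z_in_V dist_x_z gdist_sym[of z x]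
  by (simp add: distance_five_pair_def distance_five_pair_axioms_def)

lemma dist_sum_ge_5: "v \<in> V \<Longrightarrow> 5 \<le> d x v + d v z"
  using gdist_triangle[OF x_in_V _ z_in_V, of v] dist_x_z by simp

lemma D23_nonempty: obtains y where "y \<in> D23"
proof -
  have "d x z = Suc 4" using dist_x_z by simp
  then obtain a where a: "E a z" "d x a = 4" by (rule gdist_SucE[OF x_in_V z_in_V])
  have "d x a = Suc 3" using a(2) by simp
  then obtain b where b: "E b a" "d x b = 3" by (rule gdist_SucE[OF x_in_V adj_in_V(1)[OF a(1)]])
  have "d x b = Suc 2" using b(2) by simp
  then obtain c where c: "E c b" "d x c = 2" by (rule gdist_SucE[OF x_in_V adj_in_V(1)[OF b(1)]])
  have cV: "c \<in> V" using adj_in_V(1)[OF c(1)] .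
  have "d z a = 1" using gdist_adj[OF adj_sym[OF a(1)]] .
  then have "d z b \<le> 2" using gdist_adj_le[OF z_in_V adj_sym[OF b(1)]] by simp
  then have "d z c \<le> 3" using gdist_adj_le[OF z_in_V adj_sym[OF c(1)]] by simp
  then have "d c z = 3" using dist_sum_ge_5[OF cV] c(2) gdist_sym[of c z] by simp
  then show thesis using that cV c(2) by (simp add: in_layer_iff)
qed

lemma lam_plus_3_le_k: "lam + 3 \<le> k"
proof (rule ccontr)
  obtain y where "y \<in> D23" by (rule D23_nonempty)
  then have "y \<in> V" "d x y = 2" by (simp_all add: in_layer_iff)
  moreover assume "\<not> lam + 3 \<le> k"
  ultimately have "k \<le> mu + 1" using mu_large_if_lam_large[OF x_in_V] by simp
  then show False using k_eq mu_ge_2 by simp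
qed

lemma card_closer_nbrs_dist3_gt_mu:
  assumes "a \<in> V" "y \<in> V" "d a y = 3" shows "mu + 1 \<le> card (closer_nbrs a y)"
proof (rule ccontr)
  assume "\<not> mu + 1 \<le> card (closer_nbrs a y)"
  then have "card (closer_nbrs a y) = mu" using mu_le_card_closer_nbrs_dist3[OF assms] by simp
  then have "2 * mu \<le> lam + 1" using lam_ge_if_card_closer_nbrs_dist3_eq_mu[OF mu_ge_2 assms]
    by simp
  then show False using lam_plus_3_le_k k_eq by simp
qed

lemma closer_nbrs_z_D23_subset:
  assumes "y \<in> D23" shows "closer_nbrs z y \<subseteq> D32"
proof
  fix t assume t: "t \<in> closer_nbrs z y"
  have dy: "d x y = 2" "d z y = 3" using assms gdist_sym[of y z] by (auto simp: in_layer_iff)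
  have "E y t" "d z t = 2" using t dy(2) by simp_all
  then have tV: "t \<in> V" using adj_in_V(2) by blast
  have "d x t \<le> 3" using gdist_adj_le[OF x_in_V \<open>E y t\<close>] dy(1) by simp
  then show "t \<in> D32" using dist_sum_ge_5[OF tV] tV \<open>d z t = 2\<close> gdist_sym[of t z]
    by (simp add: in_layer_iff)
qed

lemma nbrs_D23:
  assumes y: "y \<in> D23"
  shows "card (closer_nbrs x y) = mu" and "card (closer_nbrs z y) = mu + 1"
    and "\<Gamma> y = closer_nbrs x y \<union> closer_nbrs z y"
proof -
  have yV: "y \<in> V" and dy: "d x y = 2" "d z y = 3" using y gdist_sym[of y z]
    by (auto simp: in_layer_iff)
  show card_x: "card (closer_nbrs x y) = mu"
    using closer_nbrs_dist2[OF x_in_V dy(1)] common_dist2[OF x_in_V yV dy(1)] by simp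
  have disj: "closer_nbrs x y \<inter> closer_nbrs z y = {}"
    using closer_nbrs_z_D23_subset[OF y] dy(1) by (auto simp: in_layer_iff)
  have sub: "closer_nbrs x y \<union> closer_nbrs z y \<subseteq> \<Gamma> y"
    using closer_nbrs_subset_nbrs by blast
  have card_un: "card (closer_nbrs x y \<union> closer_nbrs z y)
      = card (closer_nbrs x y) + card (closer_nbrs z y)"
    using disj by (simp add: card_Un_disjoint)
  moreover have "card (closer_nbrs x y \<union> closer_nbrs z y) \<le> k"
    using card_mono[OF finite_nbrs sub] regular[OF yV] by simp
  moreover have "mu + 1 \<le> card (closer_nbrs z y)"
    using card_closer_nbrs_dist3_gt_mu[OF z_in_V yV dy(2)] .
  ultimately show card_z: "card (closer_nbrs z y) = mu + 1" using card_x k_eq by simp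
  show "\<Gamma> y = closer_nbrs x y \<union> closer_nbrs z y"
    using card_seteq[OF finite_nbrs sub] card_un card_x card_z regular[OF yV] k_eq by simp
qed

lemma closer_nbrs_x_D32_subset: "u \<in> D32 \<Longrightarrow> closer_nbrs x u \<subseteq> D23"
proof -
  interpret swapped: distance_five_pair V E k lam mu z x by (rule swap)
  show "u \<in> D32 \<Longrightarrow> closer_nbrs x u \<subseteq> D23"
    using swapped.closer_nbrs_z_D23_subset by (simp add: layer_swap)
qed

lemma nbrs_D32:
  assumes "u \<in> D32"
  shows "card (closer_nbrs z u) = mu" and "card (closer_nbrs x u) = mu + 1"
    and "\<Gamma> u = closer_nbrs z u \<union> closer_nbrs x u"
proof -
  interpret swapped: distance_five_pair V E k lam mu z x by (rule swap)
  show "card (closer_nbrs z u) = mu" "card (closer_nbrs x u) = mu + 1"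
    "\<Gamma> u = closer_nbrs z u \<union> closer_nbrs x u"
    using swapped.nbrs_D23 assms by (simp_all add: layer_swap)
qed

lemma lam_less_mu: "lam < mu"
proof -
  obtain y where y: "y \<in> D23" by (rule D23_nonempty)
  then have "closer_nbrs x y \<noteq> {}" using nbrs_D23(1)[OF y] mu_ge_2 by auto
  then obtain m where m: "m \<in> closer_nbrs x y" by blast
  then have "E y m" "d x m = 1" using y by (auto simp: in_layer_iff)
  have "\<Gamma> m \<inter> \<Gamma> y \<subseteq> closer_nbrs x y - {m}"
  proof
    fix t assume t: "t \<in> \<Gamma> m \<inter> \<Gamma> y"
    then have "d x t \<le> 2" using gdist_adj_le[OF x_in_V, of m t] \<open>d x m = 1\<close> by simp
    then have "t \<notin> closer_nbrs z y" using closer_nbrs_z_D23_subset[OF y]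
      by (auto simp: in_layer_iff)
    moreover have "t \<noteq> m" using t adj_irrefl by auto
    ultimately show "t \<in> closer_nbrs x y - {m}" using t nbrs_D23(3)[OF y] by blast
  qed
  then have "card (\<Gamma> m \<inter> \<Gamma> y) \<le> card (closer_nbrs x y - {m})" by (simp add: card_mono)
  also have "\<dots> < mu" using nbrs_D23(1)[OF y] m mu_ge_2 by simp
  finally show ?thesis using common_adj[OF adj_sym[OF \<open>E y m\<close>]] by simp
qed

lemma eq_if_common_nbrs_gt_mu:
  assumes "a \<in> V" "b \<in> V" "S \<subseteq> \<Gamma> a \<inter> \<Gamma> b" "mu < card S" shows "a = b"
  using card_common_nbrs_le[OF assms(1,2)] card_le_common_nbrs[OF assms(3)] assms(4) lam_less_mu
  by fastforce

lemma closer_nbrs_x_D23: "y \<in> D23 \<Longrightarrow> closer_nbrs x y = \<Gamma> x \<inter> \<Gamma> y"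
  using closer_nbrs_dist2[OF x_in_V] by (simp add: in_layer_iff)

lemma closer_nbrs_z_D23D:
  assumes "y \<in> D23" "u \<in> closer_nbrs z y" shows "u \<in> D32" "y \<in> closer_nbrs x u"
proof -
  show u: "u \<in> D32" using closer_nbrs_z_D23_subset assms by blast
  have "E u y" using assms(2) adj_sym by simp
  then show "y \<in> closer_nbrs x u" using u assms(1) by (simp add: in_layer_iff)
qed

lemma common_nbrs_nbr_x_D32:
  assumes u: "u \<in> D32" and w: "E x w" and t: "t \<in> closer_nbrs x u" "E w t"
  shows "d w u = 2" and "\<Gamma> w \<inter> \<Gamma> u = \<Gamma> w \<inter> closer_nbrs x u"
    and "card (\<Gamma> w \<inter> closer_nbrs x u) = mu"
proof -
  have uV: "u \<in> V" "d x u = 3" using u by (simp_all add: in_layer_iff)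
  have wV: "w \<in> V" using adj_in_V(2)[OF w] .
  have "w \<noteq> u" "\<not> E w u"
    using gdist_adj[OF w] uV(2) gdist_adj_le[OF x_in_V, of w u] by auto
  moreover have "E t u" using t(1) adj_sym by simp
  ultimately show d2: "d w u = 2" using gdist_eq_2I[OF wV uV(1) _ _ t(2)] by simp
  show eq: "\<Gamma> w \<inter> \<Gamma> u = \<Gamma> w \<inter> closer_nbrs x u"
  proof (intro equalityI subsetI)
    fix s assume s: "s \<in> \<Gamma> w \<inter> \<Gamma> u"
    then have "d x s \<le> 2" using gdist_adj_le[OF x_in_V, of w s] gdist_adj[OF w] by simp
    moreover have "E s u" using s adj_sym by simp
    then have "3 \<le> Suc (d x s)" using gdist_adj_le[OF x_in_V \<open>E s u\<close>] uV(2) by simp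
    ultimately show "s \<in> \<Gamma> w \<inter> closer_nbrs x u" using s uV(2) by simp
  qed (simp add: closer_nbrs_def)
  show "card (\<Gamma> w \<inter> closer_nbrs x u) = mu"
    using common_dist2[OF wV uV(1) d2] eq by simp
qed

definition missed :: "'a \<Rightarrow> 'a \<Rightarrow> 'a" where
  "missed u w = the_elem (closer_nbrs x u - \<Gamma> w)"

lemma closer_nbrs_Diff_nbrs:
  assumes "u \<in> D32" "E x w" "t \<in> closer_nbrs x u" "E w t"
  shows "closer_nbrs x u - \<Gamma> w = {missed u w}"
proof -
  have "card (closer_nbrs x u - \<Gamma> w) = card (closer_nbrs x u) - card (closer_nbrs x u \<inter> \<Gamma> w)"
    by (simp add: card_Diff_subset_Int)
  also have "\<dots> = 1"
    using nbrs_D32(2)[OF assms(1)] common_nbrs_nbr_x_D32(3)[OF assms] by (simp add: Int_commute)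
  finally obtain s where "closer_nbrs x u - \<Gamma> w = {s}" by (rule card_1_singletonE)
  then show ?thesis unfolding missed_def by simp
qed

context
  fixes y u
  assumes y: "y \<in> D23" and u: "u \<in> closer_nbrs z y"
begin

lemma missed_Diff: "m \<in> closer_nbrs x y \<Longrightarrow> closer_nbrs x u - \<Gamma> m = {missed u m}"
  using closer_nbrs_Diff_nbrs[OF closer_nbrs_z_D23D(1)[OF y u] _ closer_nbrs_z_D23D(2)[OF y u]]
    closer_nbrs_x_D23[OF y] adj_sym by simp

lemma missed_mem:
  assumes m: "m \<in> closer_nbrs x y"
  shows "missed u m \<in> closer_nbrs x u" "missed u m \<noteq> y" "\<not> E m (missed u m)"
proof -
  have "missed u m \<in> closer_nbrs x u - \<Gamma> m" using missed_Diff[OF m] by simp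
  then have missed: "missed u m \<in> closer_nbrs x u" "missed u m \<notin> \<Gamma> m" by auto
  then show "missed u m \<in> closer_nbrs x u" "\<not> E m (missed u m)" by simp_all
  have "E m y" using m closer_nbrs_x_D23[OF y] adj_sym by simp
  then show "missed u m \<noteq> y" using missed(2) by auto
qed

lemma adj_if_not_missed:
  assumes "m \<in> closer_nbrs x y" "t \<in> closer_nbrs x u" "t \<noteq> missed u m"
  shows "E m t"
proof -
  have "t \<notin> closer_nbrs x u - \<Gamma> m" using missed_Diff[OF assms(1)] assms(3) by simp
  then show ?thesis using assms(2) by simp
qed

text \<open>Two vertices of \<open>\<Gamma> x \<inter> \<Gamma> y\<close> missing the same vertex would share \<open>x\<close> and \<open>\<mu>\<close> vertices of
  \<open>closer_nbrs x u\<close>.\<close>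

lemma inj_on_missed: "inj_on (missed u) (closer_nbrs x y)"
proof (rule inj_onI, rule ccontr)
  fix m1 m2 assume m: "m1 \<in> closer_nbrs x y" "m2 \<in> closer_nbrs x y" "missed u m1 = missed u m2"
    "m1 \<noteq> m2"
  define t where "t = missed u m1"
  have "x \<in> \<Gamma> m1 \<inter> \<Gamma> m2" using m(1,2) closer_nbrs_x_D23[OF y] adj_sym by auto
  moreover have "closer_nbrs x u - {t} \<subseteq> \<Gamma> m1 \<inter> \<Gamma> m2"
  proof
    fix s assume s: "s \<in> closer_nbrs x u - {t}"
    then have "E m1 s" "E m2 s"
      using adj_if_not_missed[OF m(1), of s] adj_if_not_missed[OF m(2), of s] m(3)
        by (auto simp: t_def)
    then show "s \<in> \<Gamma> m1 \<inter> \<Gamma> m2" by simp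
  qed
  ultimately have sub: "insert x (closer_nbrs x u - {t}) \<subseteq> \<Gamma> m1 \<inter> \<Gamma> m2" by blast
  have "x \<notin> closer_nbrs x u" using closer_nbrs_z_D23D(1)[OF y u] x_in_V by (simp add: in_layer_iff)
  then have "x \<notin> closer_nbrs x u - {t}" by blast
  moreover have "card (closer_nbrs x u - {t}) = mu"
    using card_Diff_singleton[OF missed_mem(1)[OF m(1)]] nbrs_D32(2)[OF closer_nbrs_z_D23D(1)[OF y
      u]]
    by (simp add: t_def)
  ultimately have "card (insert x (closer_nbrs x u - {t})) = mu + 1" by simp
  moreover have "m1 \<in> V" "m2 \<in> V" using m(1,2) closer_nbr_in_V by blast+
  ultimately show False using eq_if_common_nbrs_gt_mu[OF _ _ sub] m(4) by simp
qed

lemma missed_image: "missed u ` closer_nbrs x y = closer_nbrs x u - {y}"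
proof (rule card_seteq)
  show "missed u ` closer_nbrs x y \<subseteq> closer_nbrs x u - {y}" using missed_mem by blast
  show "card (closer_nbrs x u - {y}) \<le> card (missed u ` closer_nbrs x y)"
    using card_image[OF inj_on_missed] nbrs_D23(1)[OF y] nbrs_D32(2)[OF closer_nbrs_z_D23D(1)[OF y
      u]]
      closer_nbrs_z_D23D(2)[OF y u] by simp
qed simp

lemma closer_nbrs_D32_Diff_subset_nbrs:
  assumes w: "E x w" "w \<notin> closer_nbrs x y" and t: "t \<in> closer_nbrs x u" "E w t"
  shows "closer_nbrs x u - {y} \<subseteq> \<Gamma> w"
proof -
  have u3: "u \<in> D32" using closer_nbrs_z_D23D(1)[OF y u] .
  have "\<not> E w y" using w closer_nbrs_x_D23[OF y] adj_sym by auto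
  then have sub: "\<Gamma> w \<inter> closer_nbrs x u \<subseteq> closer_nbrs x u - {y}" by auto
  have "card (closer_nbrs x u - {y}) \<le> card (\<Gamma> w \<inter> closer_nbrs x u)"
    using common_nbrs_nbr_x_D32(3)[OF u3 w(1) t] nbrs_D32(2)[OF u3] closer_nbrs_z_D23D(2)[OF y u]
      by simp
  then have "\<Gamma> w \<inter> closer_nbrs x u = closer_nbrs x u - {y}" using card_seteq[OF _ sub] by simp
  then show ?thesis by blast
qed

end

context
  fixes y u
  assumes y: "y \<in> D23" and u: "u \<in> closer_nbrs z y"
begin

lemma adj_missed_other:
  assumes "m \<in> closer_nbrs x y" "m' \<in> closer_nbrs x y" "m' \<noteq> m"
  shows "E m' (missed u m)"
proof -
  have "missed u m \<noteq> missed u m'" using inj_onD[OF inj_on_missed[OF y u]] assms by blast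
  then show ?thesis using adj_if_not_missed[OF y u assms(2) missed_mem(1)[OF y u assms(1)]] by blast
qed

lemma missed_D23: "m \<in> closer_nbrs x y \<Longrightarrow> missed u m \<in> D23"
  using closer_nbrs_x_D32_subset[OF closer_nbrs_z_D23D(1)[OF y u]] missed_mem(1)[OF y u] by blast

lemma exists_non_adj_closer_nbr:
  assumes "t \<in> closer_nbrs x u" "t \<noteq> y" obtains m where "m \<in> closer_nbrs x y" "\<not> E m t"
proof -
  have "t \<in> missed u ` closer_nbrs x y" using missed_image[OF y u] assms by blast
  then obtain m where "m \<in> closer_nbrs x y" "t = missed u m" by blast
  then show thesis using that missed_mem(3)[OF y u] by blast
qed

lemma closer_nbrs_missed_Int:
  assumes m0: "m0 \<in> closer_nbrs x y"
  shows "closer_nbrs x (missed u m0) \<inter> closer_nbrs x y = closer_nbrs x y - {m0}"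
proof (intro equalityI subsetI)
  have t0: "missed u m0 \<in> D23" "\<not> E m0 (missed u m0)"
    using missed_D23[OF m0] missed_mem(3)[OF y u m0] by simp_all
  fix m assume "m \<in> closer_nbrs x (missed u m0) \<inter> closer_nbrs x y"
  then show "m \<in> closer_nbrs x y - {m0}" using t0 adj_sym closer_nbrs_x_D23[OF t0(1)] by auto
next
  fix m assume m: "m \<in> closer_nbrs x y - {m0}"
  then have "E m (missed u m0)" using adj_missed_other[OF m0] by simp
  then show "m \<in> closer_nbrs x (missed u m0) \<inter> closer_nbrs x y"
    using m closer_nbrs_x_D23[OF missed_D23[OF m0]] closer_nbrs_x_D23[OF y] adj_sym by auto
qed

lemma closer_nbrs_missed_eq_insert:
  assumes e: "E x e" "e \<notin> closer_nbrs x y" "closer_nbrs x u - {y} \<subseteq> \<Gamma> e"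
    and m: "m \<in> closer_nbrs x y"
  shows "closer_nbrs x (missed u m) = insert e (closer_nbrs x y - {m})"
proof -
  have s: "missed u m \<in> D23" "missed u m \<in> closer_nbrs x u - {y}"
    using missed_D23[OF m] missed_mem(1,2)[OF y u m] by simp_all
  have "E e (missed u m)" using e(3) s(2) by auto
  moreover have "E m' (missed u m)" if "m' \<in> closer_nbrs x y - {m}" for m'
    using adj_missed_other[OF m] that by simp
  ultimately have sub: "insert e (closer_nbrs x y - {m}) \<subseteq> closer_nbrs x (missed u m)"
    using e(1) closer_nbrs_x_D23[OF s(1)] closer_nbrs_x_D23[OF y] adj_sym by auto
  have "e \<notin> closer_nbrs x y - {m}" using e(2) by blast
  then have "card (insert e (closer_nbrs x y - {m})) = mu"
    using card_Diff_singleton[OF m] nbrs_D23(1)[OF y] mu_ge_2 by simp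
  then show ?thesis using card_seteq[OF _ sub] nbrs_D23(1)[OF s(1)] by simp
qed

text \<open>The extra vertex \<open>e\<close> is the unique neighbour of \<open>x\<close> adjacent to \<open>missed u m\<^sub>0\<close> but not to
  \<open>y\<close>; it sees every vertex of \<open>closer_nbrs x u - {y}\<close>.\<close>

lemma exists_extra:
  obtains e where "E x e" "e \<notin> closer_nbrs x y"
    "\<forall>m \<in> closer_nbrs x y. closer_nbrs x (missed u m) = insert e (closer_nbrs x y - {m})"
proof -
  have "closer_nbrs x y \<noteq> {}" using nbrs_D23(1)[OF y] mu_ge_2 by auto
  then obtain m0 where m0: "m0 \<in> closer_nbrs x y" by blast
  define t0 where "t0 = missed u m0"
  have t0: "t0 \<in> D23" using missed_D23[OF m0] by (simp add: t0_def)
  have "card (closer_nbrs x t0 - closer_nbrs x y) = 1"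
    using card_Diff_subset_Int[of "closer_nbrs x t0" "closer_nbrs x y"] nbrs_D23(1)[OF t0]
      nbrs_D23(1)[OF y] closer_nbrs_missed_Int[OF m0] m0 mu_ge_2 by (simp add: t0_def)
  then obtain e where e: "closer_nbrs x t0 - closer_nbrs x y = {e}" by (rule card_1_singletonE)
  then have "e \<in> closer_nbrs x t0" "e \<notin> closer_nbrs x y" by auto
  then have ex: "E x e" "E e t0" "e \<notin> closer_nbrs x y"
    using closer_nbrs_x_D23[OF t0] adj_sym by auto
  have "closer_nbrs x u - {y} \<subseteq> \<Gamma> e"
    using closer_nbrs_D32_Diff_subset_nbrs[OF y u ex(1,3)] missed_mem(1)[OF y u m0] ex(2)
    by (simp add: t0_def)
  then show thesis using that ex(1,3) closer_nbrs_missed_eq_insert[OF ex(1,3)] by blast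
qed

end

definition extra :: "'a \<Rightarrow> 'a \<Rightarrow> 'a" where
  "extra u y = (SOME e. E x e \<and> e \<notin> closer_nbrs x y \<and>
     (\<forall>m\<in>closer_nbrs x y. closer_nbrs x (missed u m) = insert e (closer_nbrs x y - {m})))"

lemma extra:
  assumes "y \<in> D23" "u \<in> closer_nbrs z y"
  shows "E x (extra u y)" "extra u y \<notin> closer_nbrs x y"
    and "m \<in> closer_nbrs x y \<Longrightarrow>
      closer_nbrs x (missed u m) = insert (extra u y) (closer_nbrs x y - {m})"
proof -
  obtain e where e: "E x e" "e \<notin> closer_nbrs x y"
    "\<forall>m \<in> closer_nbrs x y. closer_nbrs x (missed u m) = insert e (closer_nbrs x y - {m})"
    by (rule exists_extra[OF assms])
  then have "E x e \<and> e \<notin> closer_nbrs x y \<and>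
      (\<forall>m\<in>closer_nbrs x y. closer_nbrs x (missed u m) = insert e (closer_nbrs x y - {m}))"
    by simp
  then have "E x (extra u y) \<and> extra u y \<notin> closer_nbrs x y \<and>
      (\<forall>m\<in>closer_nbrs x y. closer_nbrs x (missed u m) = insert (extra u y) (closer_nbrs x y - {m}))"
    unfolding extra_def by (rule someI)
  then show "E x (extra u y)" "extra u y \<notin> closer_nbrs x y"
    and "m \<in> closer_nbrs x y \<Longrightarrow>
      closer_nbrs x (missed u m) = insert (extra u y) (closer_nbrs x y - {m})"
    by simp_all
qed

text \<open>If \<open>y\<^sub>1 \<noteq> y\<^sub>2\<close> had the same neighbours in \<open>\<Gamma> x\<close>, two of them would share \<open>x\<close>, \<open>y\<^sub>2\<close> and all
  but two vertices of \<open>closer_nbrs x u\<close> for some \<open>u\<close> adjacent to \<open>y\<^sub>1\<close>.\<close>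

lemma inj_on_closer_nbrs_D23: "inj_on (closer_nbrs x) D23"
proof (rule inj_onI, rule ccontr)
  fix y1 y2 assume y: "y1 \<in> D23" "y2 \<in> D23" and eq: "closer_nbrs x y1 = closer_nbrs x y2"
    and ne: "y1 \<noteq> y2"
  have "closer_nbrs z y1 \<noteq> {}" using nbrs_D23(2)[OF y(1)] by auto
  then obtain u where u: "u \<in> closer_nbrs z y1" by blast
  have u3: "u \<in> D32" using closer_nbrs_z_D23D(1)[OF y(1) u] .
  have "2 \<le> card (closer_nbrs x y1)" using nbrs_D23(1)[OF y(1)] mu_ge_2 by simp
  then obtain m1 m2 where m: "m1 \<in> closer_nbrs x y1" "m2 \<in> closer_nbrs x y1" "m1 \<noteq> m2"
    by (rule card_ge_2E)
  define s1 s2 where "s1 = missed u m1" and "s2 = missed u m2"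
  have s: "s1 \<in> closer_nbrs x u" "s2 \<in> closer_nbrs x u" "s1 \<noteq> s2"
    using missed_mem(1)[OF y(1) u] inj_onD[OF inj_on_missed[OF y(1) u]] m
      by (auto simp: s1_def s2_def)
  have y2_nbrs: "E m1 y2" "E m2 y2" using m eq closer_nbrs_x_D23[OF y(2)] adj_sym by auto
  have "y2 \<notin> closer_nbrs x u"
    using exists_non_adj_closer_nbr[OF y(1) u _ ne[symmetric]] y2_nbrs eq adj_sym
      closer_nbrs_x_D23[OF y(2)] by fastforce
  have "x \<notin> closer_nbrs x u" using u3 x_in_V by (simp add: in_layer_iff)
  have "x \<noteq> y2" using y(2) x_in_V by (auto simp: in_layer_iff)
  have "closer_nbrs x u - {s1, s2} \<subseteq> \<Gamma> m1 \<inter> \<Gamma> m2"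
  proof
    fix t assume "t \<in> closer_nbrs x u - {s1, s2}"
    then show "t \<in> \<Gamma> m1 \<inter> \<Gamma> m2"
      using adj_if_not_missed[OF y(1) u m(1), of t] adj_if_not_missed[OF y(1) u m(2), of t]
      by (auto simp: s1_def s2_def)
  qed
  moreover have "x \<in> \<Gamma> m1 \<inter> \<Gamma> m2" using m closer_nbrs_x_D23[OF y(1)] adj_sym by auto
  ultimately have sub: "insert x (insert y2 (closer_nbrs x u - {s1, s2})) \<subseteq> \<Gamma> m1 \<inter> \<Gamma> m2"
    using y2_nbrs by simp
  have "card (closer_nbrs x u - {s1, s2}) = mu - 1"
    using s nbrs_D32(2)[OF u3] by (simp add: card_Diff_subset)
  then have "card (insert x (insert y2 (closer_nbrs x u - {s1, s2}))) = mu + 1"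
    using \<open>y2 \<notin> closer_nbrs x u\<close> \<open>x \<notin> closer_nbrs x u\<close> \<open>x \<noteq> y2\<close> mu_ge_2
    by (simp del: in_closer_nbrs_iff)
  moreover have "m1 \<in> V" "m2 \<in> V" using m closer_nbr_in_V by blast+
  ultimately show False using eq_if_common_nbrs_gt_mu[OF _ _ sub] m(3) by simp
qed

lemma inj_on_extra:
  assumes y: "y \<in> D23" shows "inj_on (\<lambda>u. extra u y) (closer_nbrs z y)"
proof (rule inj_onI, rule ccontr)
  fix u1 u2 assume u: "u1 \<in> closer_nbrs z y" "u2 \<in> closer_nbrs z y"
    and eq: "extra u1 y = extra u2 y" and ne: "u1 \<noteq> u2"
  have "closer_nbrs x u1 \<subseteq> \<Gamma> u1 \<inter> \<Gamma> u2"
  proof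
    fix t assume t: "t \<in> closer_nbrs x u1"
    have "E u2 t"
    proof (cases "t = y")
      case True
      then show ?thesis using u(2) adj_sym by simp
    next
      case False
      then have "t \<in> missed u1 ` closer_nbrs x y" using missed_image[OF y u(1)] t by blast
      then obtain m where m: "m \<in> closer_nbrs x y" "t = missed u1 m" by blast
      have "closer_nbrs x t = closer_nbrs x (missed u2 m)"
        using extra(3)[OF y u(1) m(1)] extra(3)[OF y u(2) m(1)] eq m(2) by simp
      then have "t = missed u2 m"
        using inj_onD[OF inj_on_closer_nbrs_D23] missed_D23[OF y u(1) m(1)] missed_D23[OF y u(2)
          m(1)] m(2)
        by blast
      then show ?thesis using missed_mem(1)[OF y u(2) m(1)] by simp
    qed
    then show "t \<in> \<Gamma> u1 \<inter> \<Gamma> u2" using t by simp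
  qed
  moreover have "mu < card (closer_nbrs x u1)" using nbrs_D32(2) closer_nbrs_z_D23D(1)[OF y u(1)]
    by simp
  moreover have "u1 \<in> V" "u2 \<in> V" using u closer_nbr_in_V by blast+
  ultimately show False using eq_if_common_nbrs_gt_mu ne by blast
qed

lemma extra_image:
  assumes y: "y \<in> D23" shows "(\<lambda>u. extra u y) ` closer_nbrs z y = \<Gamma> x - closer_nbrs x y"
proof (rule card_seteq)
  show "(\<lambda>u. extra u y) ` closer_nbrs z y \<subseteq> \<Gamma> x - closer_nbrs x y"
    using extra(1,2)[OF y] by auto
  have "closer_nbrs x y \<subseteq> \<Gamma> x" using closer_nbrs_x_D23[OF y] by blast
  then have "card (\<Gamma> x - closer_nbrs x y) = mu + 1"
    using card_Diff_subset[of "closer_nbrs x y" "\<Gamma> x"] regular[OF x_in_V] nbrs_D23(1)[OF y] k_eq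
    by simp
  then show "card (\<Gamma> x - closer_nbrs x y) \<le> card ((\<lambda>u. extra u y) ` closer_nbrs z y)"
    using card_image[OF inj_on_extra[OF y]] nbrs_D23(2)[OF y] by simp
qed simp

lemma nbr_x_in_closer_nbrs_D23:
  assumes w: "E x w" obtains y where "y \<in> D23" "w \<in> closer_nbrs x y"
proof -
  obtain y where y: "y \<in> D23" by (rule D23_nonempty)
  show thesis
  proof (cases "w \<in> closer_nbrs x y")
    case False
    then have "w \<in> \<Gamma> x - closer_nbrs x y" using w by simp
    then obtain u where u: "u \<in> closer_nbrs z y" "w = extra u y" using extra_image[OF y] by blast
    have "closer_nbrs x y \<noteq> {}" using nbrs_D23(1)[OF y] mu_ge_2 by auto
    then obtain m where m: "m \<in> closer_nbrs x y" by blast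
    have "w \<in> closer_nbrs x (missed u m)" using extra(3)[OF y u(1) m] u(2) by simp
    then show thesis using that missed_D23[OF y u(1) m] by blast
  qed (use that y in blast)
qed

lemma dist_nbr_x_z: assumes "E x w" shows "d w z = 4"
proof -
  obtain y where y: "y \<in> D23" "w \<in> closer_nbrs x y" using nbr_x_in_closer_nbrs_D23[OF assms] .
  have wV: "w \<in> V" using adj_in_V(2)[OF assms] .
  have "d z w \<le> Suc (d z y)" using gdist_adj_le[OF z_in_V] y(2) by simp
  moreover have "d z y = 3" using y(1) gdist_sym[of y z] by (simp add: in_layer_iff)
  moreover have "5 \<le> d x w + d w z" using dist_sum_ge_5[OF wV] .
  ultimately show ?thesis using gdist_adj[OF assms] gdist_sym[of z w] by simp
qed

lemma inj_on_missed_pairs: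
  assumes y: "y \<in> D23"
  shows "inj_on (\<lambda>(u, m). missed u m) (closer_nbrs z y \<times> closer_nbrs x y)"
proof (rule inj_onI)
  fix p q assume p: "p \<in> closer_nbrs z y \<times> closer_nbrs x y"
    and q: "q \<in> closer_nbrs z y \<times> closer_nbrs x y"
    and eq_pq: "(\<lambda>(u, m). missed u m) p = (\<lambda>(u, m). missed u m) q"
  obtain u m u' m' where pq: "p = (u, m)" "q = (u', m')" by fastforce
  then have u: "u \<in> closer_nbrs z y" "u' \<in> closer_nbrs z y"
    and m: "m \<in> closer_nbrs x y" "m' \<in> closer_nbrs x y" and eq: "missed u m = missed u' m'"
    using p q eq_pq by auto
  have sets:
    "insert (extra u y) (closer_nbrs x y - {m}) = insert (extra u' y) (closer_nbrs x y - {m'})"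
    using extra(3)[OF y u(1) m(1)] extra(3)[OF y u(2) m(2)] eq by simp
  have out: "extra u y \<notin> closer_nbrs x y" "extra u' y \<notin> closer_nbrs x y"
    using extra(2)[OF y] u by blast+
  have "extra u y = extra u' y"
  proof -
    have "extra u y \<in> insert (extra u' y) (closer_nbrs x y - {m'})" using sets by blast
    then show ?thesis using out(1) by blast
  qed
  then have "u = u'" using inj_onD[OF inj_on_extra[OF y]] u by blast
  moreover have "m = m'"
  proof (rule ccontr)
    assume "m \<noteq> m'"
    then have "m \<in> insert (extra u' y) (closer_nbrs x y - {m'})" using m(1) by blast
    then have "m \<in> insert (extra u y) (closer_nbrs x y - {m})" using sets by simp
    then show False using out(1) m(1) by blast
  qed
  ultimately show "p = q" using pq by simp
qed

text \<open>For a neighbour \<open>v\<close> of \<open>x\<close> in \<open>\<Gamma> x \<inter> \<Gamma> y\<^sub>0\<close>, the vertices \<open>missed u m\<close> with \<open>u\<close> adjacent to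
  \<open>y\<^sub>0\<close> and \<open>m \<noteq> v\<close> are \<open>(\<mu> + 1)(\<mu> - 1)\<close> further neighbours of \<open>v\<close>.\<close>

lemma nbr_x_many_nbrs:
  assumes v: "E x v"
  obtains Z where "Z \<subseteq> \<Gamma> v" "card Z = (mu + 1) * (mu - 1) + 2" "Z - {x} \<subseteq> D23"
proof -
  obtain y0 where y0: "y0 \<in> D23" "v \<in> closer_nbrs x y0" using nbr_x_in_closer_nbrs_D23[OF v] .
  define P where "P = closer_nbrs z y0 \<times> (closer_nbrs x y0 - {v})"
  define Y where "Y = (\<lambda>(u, m). missed u m) ` P"
  have Y_sub: "Y \<subseteq> \<Gamma> v \<inter> D23"
  proof
    fix t assume "t \<in> Y"
    then obtain p where p: "p \<in> P" "t = (\<lambda>(u, m). missed u m) p" unfolding Y_def by blast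
    obtain u m where "p = (u, m)" by fastforce
    then have um: "u \<in> closer_nbrs z y0" "m \<in> closer_nbrs x y0" "m \<noteq> v" "t = missed u m"
      using p unfolding P_def by auto
    have "E v t" using adj_missed_other[OF y0(1) um(1,2) y0(2)] um(3,4) by simp
    then show "t \<in> \<Gamma> v \<inter> D23" using missed_D23[OF y0(1) um(1,2)] um(4) by simp
  qed
  have "inj_on (\<lambda>(u, m). missed u m) P"
    using inj_on_missed_pairs[OF y0(1)] by (rule inj_on_subset) (auto simp: P_def)
  then have card_Y: "card Y = (mu + 1) * (mu - 1)"
    using nbrs_D23(1,2)[OF y0(1)] y0(2) by (simp add: Y_def P_def card_image card_cartesian_product)
  have "y0 \<notin> Y"
  proof
    assume "y0 \<in> Y"
    then obtain p where p: "p \<in> P" "y0 = (\<lambda>(u, m). missed u m) p" unfolding Y_def by blast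
    obtain u m where "p = (u, m)" by fastforce
    then show False using p missed_mem(2)[OF y0(1), of u m] unfolding P_def by auto
  qed
  moreover have "x \<notin> insert y0 Y" using Y_sub y0(1) x_in_V by (auto simp: in_layer_iff)
  ultimately have "card (insert x (insert y0 Y)) = (mu + 1) * (mu - 1) + 2"
    using card_Y by (simp add: Y_def P_def)
  moreover have "E v x" "E v y0" using adj_sym v y0(2) by simp_all
  then have "insert x (insert y0 Y) \<subseteq> \<Gamma> v" using Y_sub by auto
  moreover have "insert x (insert y0 Y) - {x} \<subseteq> D23" using Y_sub y0(1) by blast
  ultimately show thesis using that by blast
qed

lemma mu_eq_2: "mu = 2"
proof -
  have "\<Gamma> x \<noteq> {}" using regular[OF x_in_V] k_eq by auto
  then obtain v where "v \<in> \<Gamma> x" by blast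
  then have v: "E x v" by simp
  obtain Z where Z: "Z \<subseteq> \<Gamma> v" "card Z = (mu + 1) * (mu - 1) + 2" "Z - {x} \<subseteq> D23"
    by (rule nbr_x_many_nbrs[OF v])
  have "card Z \<le> 2 * mu + 1"
    using card_mono[OF finite_nbrs Z(1)] regular[OF adj_in_V(2)[OF v]] k_eq by simp
  moreover obtain n where n: "mu = n + 2" using mu_ge_2 le_Suc_ex by (metis add.commute)
  ultimately have "(n + 3) * (n + 1) + 2 \<le> 2 * n + 5" using Z(2) by simp
  then have "n = 0" by (simp add: algebra_simps)
  then show ?thesis using n by simp
qed

lemma k_eq_5: "k = 5"
  using k_eq mu_eq_2 by simp

lemma nbrs_of_nbr_x_in_D23:
  assumes "E x v" "E v t" "t \<noteq> x" shows "t \<in> D23"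
proof -
  obtain Z where Z: "Z \<subseteq> \<Gamma> v" "card Z = (mu + 1) * (mu - 1) + 2" "Z - {x} \<subseteq> D23"
    by (rule nbr_x_many_nbrs[OF assms(1)])
  have "card (\<Gamma> v) \<le> card Z"
    using Z(2) regular[OF adj_in_V(2)[OF assms(1)]] k_eq_5 mu_eq_2 by simp
  then have "Z = \<Gamma> v" using card_seteq[OF finite_nbrs Z(1)] by blast
  then have "t \<in> Z - {x}" using assms(2,3) by simp
  then show ?thesis using Z(3) by blast
qed

lemma nbr_z_closer_nbrs:
  assumes zv: "E z v" shows "\<Gamma> v - {z} \<subseteq> closer_nbrs x v"
proof
  interpret swapped: distance_five_pair V E k lam mu z x by (rule swap)
  fix t assume t: "t \<in> \<Gamma> v - {z}"
  then have "t \<in> layer z x 2 3" using swapped.nbrs_of_nbr_x_in_D23[OF zv] by simp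
  then have "d x t = 3" using gdist_sym[of t x] by (simp add: in_layer_iff)
  moreover have "d x v = 4" using swapped.dist_nbr_x_z[OF zv] gdist_sym[of v x] by simp
  ultimately show "t \<in> closer_nbrs x v" using t by simp
qed

lemma nbrs_z_closer_nbrs: "\<Gamma> z \<subseteq> closer_nbrs x z"
proof
  interpret swapped: distance_five_pair V E k lam mu z x by (rule swap)
  fix t assume "t \<in> \<Gamma> z"
  then have "E z t" "d t x = 4" using swapped.dist_nbr_x_z by simp_all
  then show "t \<in> closer_nbrs x z" using dist_x_z gdist_sym[of t x] by simp
qed

text \<open>Case by case, the lower bounds come from: \<open>x\<close> itself, \<open>\<mu> = 2\<close>, the bound at distance 3, and
  the description of the neighbourhoods of \<open>z\<close> and of its neighbours (by the symmetry \<open>x \<leftrightarrow> z\<close>).\<close>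

lemma card_closer_nbrs_geodesic_ge:
  assumes v: "v \<in> V" "d x v + d v z = 5"
  shows "d x v \<le> card (closer_nbrs x v)"
proof -
  consider "d x v = 0" | "d x v = 1" | "d x v = 2" | "d x v = 3" | "d x v = 4" | "d x v = 5"
    using v(2) by linarith
  then show ?thesis
  proof cases
    case 2
    then have "x \<in> closer_nbrs x v" using gdist_eq_1_iff[OF x_in_V v(1)] adj_sym x_in_V by simp
    then have "card {x} \<le> card (closer_nbrs x v)" by (intro card_mono) simp_all
    then show ?thesis using 2 by simp
  next
    case 3
    then show ?thesis
      using closer_nbrs_dist2[OF x_in_V 3] common_dist2[OF x_in_V v(1) 3] mu_eq_2 by simp
  next
    case 4
    then show ?thesis using card_closer_nbrs_dist3_gt_mu[OF x_in_V v(1) 4] mu_eq_2 by simp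
  next
    case 5
    then have "d z v = 1" using v(2) gdist_sym[of v z] by simp
    then have zv: "E z v" using gdist_eq_1_iff[OF z_in_V v(1)] by simp
    have "card (\<Gamma> v - {z}) = 4" using regular[OF v(1)] k_eq_5 zv adj_sym by simp
    then have "4 \<le> card (closer_nbrs x v)"
      using card_mono[OF finite_closer_nbrs nbr_z_closer_nbrs[OF zv]] by simp
    then show ?thesis using 5 by simp
  next
    case 6
    then have "v = z" using v(2) gdist_eq_0_iff[OF v(1) z_in_V] by simp
    have "card (\<Gamma> z) \<le> card (closer_nbrs x z)"
      using card_mono[OF finite_closer_nbrs nbrs_z_closer_nbrs] .
    then show ?thesis using regular[OF z_in_V] k_eq_5 6 \<open>v = z\<close> by simp
  qed simp
qed

lemma geodesic_nbrs:
  assumes v: "v \<in> V" "d x v + d v z = 5"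
  shows "card (closer_nbrs x v) = d x v" and "\<Gamma> v = closer_nbrs x v \<union> closer_nbrs z v"
proof -
  interpret swapped: distance_five_pair V E k lam mu z x by (rule swap)
  have ge_x: "d x v \<le> card (closer_nbrs x v)" using card_closer_nbrs_geodesic_ge[OF v] .
  have "d z v + d v x = 5" using v(2) gdist_sym[of v x] gdist_sym[of v z] by simp
  then have ge_z: "d z v \<le> card (closer_nbrs z v)"
    using swapped.card_closer_nbrs_geodesic_ge[OF v(1)] by simp
  have disj: "closer_nbrs x v \<inter> closer_nbrs z v = {}"
  proof -
    have False if "t \<in> closer_nbrs x v" "t \<in> closer_nbrs z v" for t
    proof -
      have "t \<in> V" using that(1) closer_nbr_in_V by blast
      then have "5 \<le> d x t + d t z" by (rule dist_sum_ge_5)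
      then show False using that v(2) gdist_sym[of t z] gdist_sym[of v z] by simp
    qed
    then show ?thesis by blast
  qed
  have sub: "closer_nbrs x v \<union> closer_nbrs z v \<subseteq> \<Gamma> v" using closer_nbrs_subset_nbrs by blast
  have card_un: "card (closer_nbrs x v \<union> closer_nbrs z v)
      = card (closer_nbrs x v) + card (closer_nbrs z v)"
    using disj by (simp add: card_Un_disjoint)
  moreover have "card (closer_nbrs x v \<union> closer_nbrs z v) \<le> 5"
    using card_mono[OF finite_nbrs sub] regular[OF v(1)] k_eq_5 by simp
  ultimately show "card (closer_nbrs x v) = d x v"
    using ge_x ge_z v(2) gdist_sym[of v z] by simp
  show "\<Gamma> v = closer_nbrs x v \<union> closer_nbrs z v"
    using card_seteq[OF finite_nbrs sub] card_un ge_x ge_z v(2) gdist_sym[of v z] regular[OF v(1)]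
      k_eq_5
    by simp
qed

lemma on_geodesic: assumes "v \<in> V" shows "d x v + d v z = 5"
proof -
  have "d x v + d v z = 5" if "walk x v n" for n v
    using that
  proof (induction n arbitrary: v)
    case 0
    then have "v = x" using walk_0_eq by blast
    then show ?case using dist_x_z x_in_V by simp
  next
    case (Suc n)
    obtain v' where v': "walk x v' n" "E v' v" using Suc.prems by (rule walk_SucE)
    have geo: "d x v' + d v' z = 5" using Suc.IH[OF v'(1)] .
    have v'V: "v' \<in> V" and vV: "v \<in> V" using adj_in_V v'(2) by blast+
    have "v \<in> \<Gamma> v'" using v'(2) by simp
    then have "v \<in> closer_nbrs x v' \<union> closer_nbrs z v'" using geodesic_nbrs(2)[OF v'V geo]
      by (simp only:)
    then have "d x v + d v z \<le> 5"
    proof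
      assume "v \<in> closer_nbrs x v'"
      then have "Suc (d x v) = d x v'" by simp
      moreover have "d z v \<le> Suc (d z v')" using gdist_adj_le[OF z_in_V v'(2)] .
      ultimately show ?thesis using geo gdist_sym[of v z] gdist_sym[of v' z] by simp
    next
      assume "v \<in> closer_nbrs z v'"
      then have "Suc (d z v) = d z v'" by simp
      moreover have "d x v \<le> Suc (d x v')" using gdist_adj_le[OF x_in_V v'(2)] .
      ultimately show ?thesis using geo gdist_sym[of v z] gdist_sym[of v' z] by simp
    qed
    then show ?case using dist_sum_ge_5[OF vV] by simp
  qed
  then show ?thesis using walk_gdist[OF x_in_V assms] by blast
qed

lemma adj_dist_Suc: assumes "E v w" shows "Suc (d x v) = d x w \<or> Suc (d x w) = d x v"
proof -
  have vV: "v \<in> V" and wV: "w \<in> V" using adj_in_V assms by blast+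
  have "w \<in> \<Gamma> v" using assms by simp
  then have "w \<in> closer_nbrs x v \<union> closer_nbrs z v"
    using geodesic_nbrs(2)[OF vV on_geodesic[OF vV]] by (simp only:)
  then show ?thesis
  proof
    assume "w \<in> closer_nbrs z v"
    then have "Suc (d z w) = d z v" by simp
    then show ?thesis
      using on_geodesic[OF vV] on_geodesic[OF wV] gdist_sym[of v z] gdist_sym[of w z] by simp
  qed simp
qed

lemma cube_like: "cube_like_graph V E x z"
proof (intro cube_like_graph.intro cube_like_graph_axioms.intro)
  show "connected_simple_graph V E" by (rule connected_simple_graph_axioms)
  show "x \<in> V" "z \<in> V" by (rule x_in_V, rule z_in_V)
  show "card (\<Gamma> a \<inter> \<Gamma> b) \<le> 2" if "a \<in> V" "b \<in> V" "a \<noteq> b" for a b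
    using card_common_nbrs_le[OF that] lam_less_mu mu_eq_2 by simp
  show "card (\<Gamma> a \<inter> \<Gamma> b) = 2" if "a \<in> V" "b \<in> V" "d a b = 2" for a b
    using common_dist2[OF that] mu_eq_2 by simp
  show "Suc (d x v) = d x w \<or> Suc (d x w) = d x v" if "E v w" for v w
    using that by (rule adj_dist_Suc)
  show "card (closer_nbrs x v) = d x v" if "v \<in> V" for v
    using geodesic_nbrs(1)[OF that on_geodesic[OF that]] .
  show "d x z = card (\<Gamma> x)" using dist_x_z regular[OF x_in_V] k_eq_5 by simp
qed

theorem graph_iso_cube_5: "graph_iso_cube V E 5"
  using cube_like_graph.graph_iso_cube[OF cube_like] regular[OF x_in_V] k_eq_5 by simp

end

theorem theorem3p5:
  fixes V :: "'a set" and E :: "'a \<Rightarrow> 'a \<Rightarrow> bool" and v k lam mu :: nat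
  assumes "amply_regular V E v k lam mu"
    and "connected_graph V E"
    and "diameter V E = 5"
    and "odd k" and "k \<ge> 5"
    and "mu = (k - 1) div 2"
  shows "graph_iso_cube V E 5"
proof -
  interpret amply_regular_graph V E k lam mu
    using assms(1,2) by (rule amply_regular_graphI)
  obtain x z where xz: "x \<in> V" "z \<in> V" "gdist V E x z = 5"
    using diameter_attained assms(3) by metis
  have "k = 2 * mu + 1" "2 \<le> mu" using assms(4-6) by (auto elim: oddE)
  then interpret distance_five_pair V E k lam mu x z
    using xz by unfold_locales
  show ?thesis by (rule graph_iso_cube_5)
qed

end
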